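(* Let $\lambda>0$ and let $f\in C[-1,1]$ be absolutely continuous with formal Gegenbauer series $f\sim\sum_{n=0}^\infty a_nC^\lambda_n$. If both $\mathcal D^\lambda_+f$ and $\mathcal D^\lambda_-f$ belong to $C[-1,1]$, then the formal Gegenbauer series $\mathcal D^\lambda_+f\sim\sum_{n=0}^\infty b_nC^{\lambda+1/2}_n$ has coefficients $$b_n=\frac{\Gamma(\lambda+\frac12)\sqrt\pi}{\Gamma(\lambda)}\,\frac{2(n+2\lambda+1)}{n+\lambda+1}\,a_{n+1},\qquad n\ge0,$$ and the formal Gegenbauer series $\mathcal D^\lambda_-f\sim\sum_{n=0}^\infty c_nC^{\lambda+1/2}_n$ has coefficients $$c_n=\frac{\Gamma(\lambda+\frac12)\sqrt\pi}{\Gamma(\lambda)}\,\frac{2n}{n+\lambda}\,a_n,\qquad n\ge0.$$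
   Context: $C^\mu_n$ are Gegenbauer polynomials with generating function $(1-2xr+r^2)^{-\mu}$. The formal Gegenbauer series $g\sim\sum a_nC^\mu_n$ has $a_n=\frac1{h^\mu_n}\int_{-1}^1 g(t)C^\mu_n(t)(1-t^2)^{\mu-1/2}dt$ with $h^\mu_n=\frac{\pi\Gamma(2\mu+n)}{2^{2\mu-1}n!(\mu+n)\Gamma(\mu)^2}$. For $f$ absolutely continuous and $\lambda\ge0$: $D^\lambda_+f(x)=(1+x)\frac{d}{dx}\Big\{(1+x)^{-\lambda}\int_{-1}^x(x-\tau)^{-1/2}(1+\tau)^{\lambda-1/2}f(\tau)\,d\tau\Big\}$, $D^\lambda_-f(x)=(1-x)\frac{d}{dx}\Big\{(1-x)^{-\lambda}\int_x^1(\tau-x)^{-1/2}(1-\tau)^{\lambda-1/2}f(\tau)\,d\tau\Big\}$, $\mathcal D^\lambda_+=D^\lambda_++D^\lambda_-$, $\mathcal D^\lambda_-=D^\lambda_+-D^\lambda_-$. *)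

theory Defs
  imports "HOL-Analysis.Analysis"
begin

definition abs_cont_on :: "real \<Rightarrow> real \<Rightarrow> (real \<Rightarrow> real) \<Rightarrow> bool" where
  "abs_cont_on a b f \<longleftrightarrow>
     (\<forall>\<epsilon>>0. \<exists>\<delta>>0. \<forall>S :: (real \<times> real) set.
        finite S \<longrightarrow>
        (\<forall>(u,v)\<in>S. a \<le> u \<and> u \<le> v \<and> v \<le> b) \<longrightarrow>
        (\<forall>p\<in>S. \<forall>q\<in>S. p \<noteq> q \<longrightarrow> {fst p<..<snd p} \<inter> {fst q<..<snd q} = {}) \<longrightarrow>
        (\<Sum>(u,v)\<in>S. v - u) < \<delta> \<longrightarrow>
        (\<Sum>(u,v)\<in>S. \<bar>f v - f u\<bar>) < \<epsilon>)"

text \<open>Gegenbauer polynomial: explicit coefficients of (1-2xr+r^2)^(-mu) in powers of r.\<close>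
definition gegenbauer :: "real \<Rightarrow> nat \<Rightarrow> real \<Rightarrow> real" where
  "gegenbauer \<mu> n x =
     (\<Sum>k = 0..n div 2. (-1) ^ k * pochhammer \<mu> (n - k) / (fact k * fact (n - 2 * k))
                         * (2 * x) ^ (n - 2 * k))"

definition gegen_norm :: "real \<Rightarrow> nat \<Rightarrow> real" where
  "gegen_norm \<mu> n =
     pi * Gamma (2 * \<mu> + real n) /
       (2 powr (2 * \<mu> - 1) * fact n * (\<mu> + real n) * (Gamma \<mu>)\<^sup>2)"

definition gegen_coeff :: "real \<Rightarrow> (real \<Rightarrow> real) \<Rightarrow> nat \<Rightarrow> real" where
  "gegen_coeff \<mu> g n =
     (1 / gegen_norm \<mu> n) *
       integral {-1..1} (\<lambda>t. g t * gegenbauer \<mu> n t * (1 - t\<^sup>2) powr (\<mu> - 1/2))"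

definition Iplus :: "real \<Rightarrow> (real \<Rightarrow> real) \<Rightarrow> real \<Rightarrow> real" where
  "Iplus lam f x = (1 + x) powr (- lam) *
     integral {-1..x} (\<lambda>\<tau>. (x - \<tau>) powr (-1/2) * (1 + \<tau>) powr (lam - 1/2) * f \<tau>)"

definition Iminus :: "real \<Rightarrow> (real \<Rightarrow> real) \<Rightarrow> real \<Rightarrow> real" where
  "Iminus lam f x = (1 - x) powr (- lam) *
     integral {x..1} (\<lambda>\<tau>. (\<tau> - x) powr (-1/2) * (1 - \<tau>) powr (lam - 1/2) * f \<tau>)"

definition Dplus :: "real \<Rightarrow> (real \<Rightarrow> real) \<Rightarrow> real \<Rightarrow> real" where
  "Dplus lam f x = (1 + x) * deriv (Iplus lam f) x"

definition Dminus :: "real \<Rightarrow> (real \<Rightarrow> real) \<Rightarrow> real \<Rightarrow> real" where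
  "Dminus lam f x = (1 - x) * deriv (Iminus lam f) x"

definition DDplus :: "real \<Rightarrow> (real \<Rightarrow> real) \<Rightarrow> real \<Rightarrow> real" where
  "DDplus lam f x = Dplus lam f x + Dminus lam f x"

definition DDminus :: "real \<Rightarrow> (real \<Rightarrow> real) \<Rightarrow> real \<Rightarrow> real" where
  "DDminus lam f x = Dplus lam f x - Dminus lam f x"

end

theory Submission
  imports Defs "HOL-Computational_Algebra.Polynomial"
begin

text \<open>
  The Gegenbauer polynomials \<open>C a n\<close> are orthogonal for the weight \<open>(1 - x\<^sup>2) powr (a - 1/2)\<close>,
  and the derivative of \<open>C a (n + 1)\<close> is \<open>2 a C (a + 1) n\<close>.
  Integrating by parts and exchanging the order of integration inside the fractional integral,
  pairing \<open>Dplus \<lambda> f\<close> with a polynomial \<open>P\<close> against \<open>(1 - x\<^sup>2) powr \<lambda>\<close> is the same as pairing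
  \<open>f\<close> with an explicit polynomial \<open>adjoint_poly \<lambda> P\<close> against \<open>(1 - x\<^sup>2) powr (\<lambda> - 1/2)\<close>.
  For \<open>P = C (\<lambda> + 1/2) n\<close> this adjoint has degree at most \<open>n + 1\<close> and is orthogonal to every
  polynomial of degree below \<open>n\<close>, so it is \<open>\<alpha> C \<lambda> n + \<beta> C \<lambda> (n + 1)\<close>; pairing with \<open>(1 + x)\<^sup>n\<close> and
  \<open>(1 + x)\<^sup>n\<^sup>+\<^sup>1\<close> and using the norms determines \<open>\<alpha>\<close> and \<open>\<beta>\<close>.
  The reflection \<open>x \<mapsto> -x\<close> turns \<open>Dminus\<close> into \<open>Dplus\<close> and flips the sign of the \<open>\<alpha>\<close>-term, so
  \<open>DDplus \<lambda> f\<close> only sees \<open>a\<^sub>n\<^sub>+\<^sub>1\<close> and \<open>DDminus \<lambda> f\<close> only sees \<open>a\<^sub>n\<close>.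
\<close>

section \<open>Gegenbauer polynomials as real polynomials\<close>

definition gegenbauer_coeff :: "real \<Rightarrow> nat \<Rightarrow> nat \<Rightarrow> real" where
  "gegenbauer_coeff a m i = (if i \<le> m \<and> even (m - i) then
      (-1) ^ ((m - i) div 2) * pochhammer a ((m + i) div 2) * 2 ^ i
        / (fact ((m - i) div 2) * fact i) else 0)"

lemma gegenbauer_coeff_above: "m < i \<Longrightarrow> gegenbauer_coeff a m i = 0" by (simp add: gegenbauer_coeff_def)

lemma gegenbauer_coeff_odd: "odd (m - i) \<Longrightarrow> gegenbauer_coeff a m i = 0" by (simp add: gegenbauer_coeff_def)

lemma gegenbauer_eq_sum_coeff: "gegenbauer a m x = (\<Sum>i\<le>m. gegenbauer_coeff a m i * x ^ i)"
proof -
  have inj: "inj_on (\<lambda>k. m - 2 * k) {0..m div 2}"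
    by (intro inj_onI) auto
  have img: "(\<lambda>k. m - 2 * k) ` {0..m div 2} \<subseteq> {..m}" by auto
  have "(\<Sum>i\<le>m. gegenbauer_coeff a m i * x ^ i) = (\<Sum>i\<in>(\<lambda>k. m - 2 * k) ` {0..m div 2}. gegenbauer_coeff a m i * x ^ i)"
  proof (rule sum.mono_neutral_right)
    show "\<forall>i\<in>{..m} - (\<lambda>k. m - 2 * k) ` {0..m div 2}. gegenbauer_coeff a m i * x ^ i = 0"
    proof
      fix i assume i: "i \<in> {..m} - (\<lambda>k. m - 2 * k) ` {0..m div 2}"
      have "odd (m - i)"
      proof
        assume "even (m - i)"
        then obtain k where k: "m - i = 2 * k" by blast
        with i have "k \<in> {0..m div 2}" "i = m - 2 * k" by auto
        with i show False by blast
      qed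
      thus "gegenbauer_coeff a m i * x ^ i = 0" by (simp add: gegenbauer_coeff_odd)
    qed
  qed (use img in auto)
  also have "\<dots> = (\<Sum>k=0..m div 2. gegenbauer_coeff a m (m - 2 * k) * x ^ (m - 2 * k))"
    by (subst sum.reindex[OF inj]) simp
  also have "\<dots> = gegenbauer a m x"
    unfolding gegenbauer_def
  proof (rule sum.cong[OF refl])
    fix k assume k: "k \<in> {0..m div 2}"
    hence k2: "2 * k \<le> m" by auto
    have e1: "(m - (m - 2 * k)) div 2 = k" using k2 by auto
    have e2: "(m + (m - 2 * k)) div 2 = m - k" using k2 by auto
    have e3: "even (m - (m - 2 * k))" using k2 by auto
    show "gegenbauer_coeff a m (m - 2 * k) * x ^ (m - 2 * k) =
      (- 1) ^ k * pochhammer a (m - k) / (fact k * fact (m - 2 * k)) * (2 * x) ^ (m - 2 * k)"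
      unfolding gegenbauer_coeff_def using e1 e2 e3 by (simp add: power_mult_distrib)
  qed
  finally show ?thesis ..
qed

definition gegenbauer_poly :: "real \<Rightarrow> nat \<Rightarrow> real poly" where
  "gegenbauer_poly a m = (\<Sum>i\<le>m. monom (gegenbauer_coeff a m i) i)"

lemma coeff_gegenbauer_poly: "coeff (gegenbauer_poly a m) i = gegenbauer_coeff a m i"
  by (auto simp: gegenbauer_poly_def coeff_sum coeff_monom gegenbauer_coeff_above)

lemma poly_gegenbauer_poly: "poly (gegenbauer_poly a m) x = gegenbauer a m x"
  by (simp add: gegenbauer_poly_def poly_sum poly_monom gegenbauer_eq_sum_coeff)

definition gegenbauer_lead :: "real \<Rightarrow> nat \<Rightarrow> real" where
  "gegenbauer_lead a m = pochhammer a m * 2 ^ m / fact m"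

lemma coeff_gegenbauer_poly_top: "coeff (gegenbauer_poly a m) m = gegenbauer_lead a m"
  by (simp add: coeff_gegenbauer_poly gegenbauer_coeff_def gegenbauer_lead_def)

lemma gegenbauer_lead_pos: "a > 0 \<Longrightarrow> gegenbauer_lead a m > 0"
  by (simp add: gegenbauer_lead_def pochhammer_pos)

lemma degree_gegenbauer_poly:
  assumes "a > 0" shows "degree (gegenbauer_poly a m) = m"
proof (rule antisym)
  show "degree (gegenbauer_poly a m) \<le> m"
    by (rule degree_le) (simp add: coeff_gegenbauer_poly gegenbauer_coeff_above)
  have "coeff (gegenbauer_poly a m) m \<noteq> 0"
    using gegenbauer_lead_pos[OF assms, of m] by (simp add: coeff_gegenbauer_poly_top)
  then show "m \<le> degree (gegenbauer_poly a m)" by (rule le_degree)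
qed

lemma gegenbauer_minus: "gegenbauer a n (- x) = (-1) ^ n * gegenbauer a n x"
proof -
  have t: "gegenbauer_coeff a n i * (- x) ^ i = (-1) ^ n * (gegenbauer_coeff a n i * x ^ i)" for i
  proof (cases "i \<le> n \<and> even (n - i)")
    case True
    hence "even (n - i)" by blast
    then obtain k where k0: "n - i = 2 * k" by (rule evenE)
    hence k: "n = i + 2 * k" using True by simp
    have "(-x) ^ i = (-1) ^ i * x ^ i" by (rule power_minus)
    moreover have "(-1::real) ^ n = (-1) ^ i" unfolding k by (simp add: power_add power_mult)
    ultimately show ?thesis by simp
  next
    case False thus ?thesis by (auto simp: gegenbauer_coeff_def)
  qed
  have "gegenbauer a n (-x) = (\<Sum>i\<le>n. gegenbauer_coeff a n i * (-x) ^ i)" by (rule gegenbauer_eq_sum_coeff)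
  also have "\<dots> = (\<Sum>i\<le>n. (-1) ^ n * (gegenbauer_coeff a n i * x ^ i))" by (rule sum.cong[OF refl t])
  also have "\<dots> = (-1) ^ n * gegenbauer a n x" by (simp only: gegenbauer_eq_sum_coeff sum_distrib_left)
  finally show ?thesis .
qed

lemma gegenbauer_coeff_deriv: "of_nat (Suc i) * gegenbauer_coeff a (Suc m) (Suc i) = 2 * a * gegenbauer_coeff (a + 1) m i"
proof (cases "i \<le> m \<and> even (m - i)")
  case True
  hence "even (m - i)" by blast
  then obtain k where k0: "m - i = 2 * k" by (rule evenE)
  with True have k: "m = i + 2 * k" by auto
  have d1: "(Suc m - Suc i) div 2 = k" "(Suc m + Suc i) div 2 = Suc (i + k)"
           "(m - i) div 2 = k" "(m + i) div 2 = i + k" using k by auto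
  have ev: "even (Suc m - Suc i)" "even (m - i)" "Suc i \<le> Suc m" "i \<le> m" using k by auto
  have eq1: "gegenbauer_coeff a (Suc m) (Suc i) = (-1) ^ k * pochhammer a (Suc (i + k)) * 2 ^ Suc i / (fact k * fact (Suc i))"
    unfolding gegenbauer_coeff_def by (simp only: ev d1 if_True conj_absorb simp_thms)
  have eq2: "gegenbauer_coeff (a + 1) m i = (-1) ^ k * pochhammer (a + 1) (i + k) * 2 ^ i / (fact k * fact i)"
    unfolding gegenbauer_coeff_def by (simp only: ev d1 if_True conj_absorb simp_thms)
  show ?thesis
    unfolding eq1 eq2 by (simp add: pochhammer_rec field_simps del: of_nat_Suc)
next
  case False
  then show ?thesis by (auto simp: gegenbauer_coeff_def)
qed

lemma pderiv_gegenbauer_poly: "pderiv (gegenbauer_poly a (Suc m)) = smult (2 * a) (gegenbauer_poly (a + 1) m)"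
  by (rule poly_eqI) (simp add: coeff_pderiv coeff_gegenbauer_poly gegenbauer_coeff_deriv[unfolded of_nat_Suc])

lemma gegenbauer_coeff_ode:
  "real (Suc i * Suc (Suc i)) * gegenbauer_coeff a m (Suc (Suc i)) + (real m * (real m + 2 * a) - real i * (real i + 2 * a)) * gegenbauer_coeff a m i = 0"
proof (cases "Suc (Suc i) \<le> m \<and> even (m - i)")
  case True
  hence "even (m - i)" by blast
  then obtain j where j0: "m - i = 2 * j" by (rule evenE)
  have "j \<noteq> 0" using j0 True by auto
  then obtain k where jk: "j = Suc k" by (cases j) auto
  have k: "m = i + 2 * Suc k" using j0 jk True by auto
  have d: "(m - Suc (Suc i)) div 2 = k" "(m + Suc (Suc i)) div 2 = Suc (Suc (i + k))"
          "(m - i) div 2 = Suc k" "(m + i) div 2 = Suc (i + k)" using k by auto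
  have ev: "even (m - Suc (Suc i))" "even (m - i)" "Suc (Suc i) \<le> m" "i \<le> m" using k by auto
  have eq1: "gegenbauer_coeff a m (Suc (Suc i)) = (-1) ^ k * pochhammer a (Suc (Suc (i + k))) * 2 ^ Suc (Suc i) / (fact k * fact (Suc (Suc i)))"
    unfolding gegenbauer_coeff_def by (simp only: ev d if_True conj_absorb simp_thms)
  have eq2: "gegenbauer_coeff a m i = (-1) ^ Suc k * pochhammer a (Suc (i + k)) * 2 ^ i / (fact (Suc k) * fact i)"
    unfolding gegenbauer_coeff_def by (simp only: ev d if_True conj_absorb simp_thms)
  have mm: "real m = real i + 2 * real k + 2" using k by simp
  have p: "pochhammer a (Suc (Suc (i + k))) = pochhammer a (Suc (i + k)) * (a + real (Suc (i + k)))"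
    by (rule pochhammer_Suc)
  show ?thesis
  proof -
    define Z where "Z = (-1) ^ k * pochhammer a (Suc (i + k)) * 2 ^ i / (fact k * fact i)"
    have f1: "(fact (Suc (Suc i)) :: real) = real (Suc i * Suc (Suc i)) * fact i"
      by (simp add: algebra_simps)
    have f2: "(fact (Suc k) :: real) = (real k + 1) * fact k" by simp
    have fk: "(fact k :: real) \<noteq> 0" "(fact i :: real) \<noteq> 0" by auto
    define W where "W = (-1) ^ k * pochhammer a (Suc (i + k)) * (2::real) ^ i"
    define F where "F = (fact k * fact i :: real)"
    define r where "r = real (Suc i * Suc (Suc i))"
    have rnz: "r \<noteq> 0" "F \<noteq> 0" using fk unfolding r_def F_def by (simp del: of_nat_mult, simp)
    have A0: "gegenbauer_coeff a m (Suc (Suc i)) = 4 * (a + real i + real k + 1) * W / (F * r)"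
      unfolding eq1 p f1 W_def F_def r_def by (simp add: mult_ac)
    have Z: "Z = W / F" unfolding Z_def W_def F_def ..
    have A: "real (Suc i * Suc (Suc i)) * gegenbauer_coeff a m (Suc (Suc i)) = 4 * (a + real i + real k + 1) * Z"
      unfolding A0 Z r_def[symmetric] using rnz by simp
    have B: "gegenbauer_coeff a m i = - Z / (real k + 1)"
      unfolding eq2 Z_def f2 using fk by (simp add: field_simps)
    have C: "real m * (real m + 2 * a) - real i * (real i + 2 * a) = 4 * (real k + 1) * (a + real i + real k + 1)"
      unfolding mm by (simp add: algebra_simps)
    show ?thesis unfolding A B C by (simp add: field_simps)
  qed
next
  case False
  then consider "m < i" | "i = m" | "Suc i = m" | "odd (m - i)" by linarith
  then show ?thesis
  proof cases
    case 3
    hence "odd (m - i)" by auto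
    thus ?thesis by (simp add: gegenbauer_coeff_def)
  qed (auto simp: gegenbauer_coeff_def)
qed

lemma gegenbauer_poly_ode:
  fixes a x :: real and m :: nat
  defines "C \<equiv> gegenbauer_poly a m"
  shows "poly (pderiv (pderiv C)) x * (1 - x\<^sup>2) - (2 * a + 1) * x * poly (pderiv C) x
           + real m * (real m + 2 * a) * poly C x = 0"
proof -
  define L where "L = pderiv (pderiv C) - pCons 0 (pCons 0 (pderiv (pderiv C)))
     - smult (2 * a + 1) (pCons 0 (pderiv C)) + smult (real m * (real m + 2 * a)) C"
  have "L = 0"
  proof (rule poly_eqI)
    fix i
    have cd: "coeff (pderiv (pderiv C)) j = real (Suc j * Suc (Suc j)) * gegenbauer_coeff a m (Suc (Suc j))" for j
      by (simp add: coeff_pderiv C_def coeff_gegenbauer_poly algebra_simps)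
    have cd1: "coeff (pderiv C) j = real (Suc j) * gegenbauer_coeff a m (Suc j)" for j
      by (simp add: coeff_pderiv C_def coeff_gegenbauer_poly)
    have cC: "coeff C j = gegenbauer_coeff a m j" for j by (simp add: C_def coeff_gegenbauer_poly)
    show "coeff L i = coeff 0 i"
    proof (cases i)
      case 0
      then show ?thesis using gegenbauer_coeff_ode[of 0 a m] by (simp add: L_def cd cC)
    next
      case (Suc j)
      show ?thesis
      proof (cases j)
        case 0
        with Suc show ?thesis using gegenbauer_coeff_ode[of 1 a m]
          by (simp add: L_def cd cd1 cC algebra_simps)
      next
        case (Suc l)
        have "coeff L i = real (Suc i * Suc (Suc i)) * gegenbauer_coeff a m (Suc (Suc i))
           - real (Suc l * Suc (Suc l)) * gegenbauer_coeff a m (Suc (Suc l))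
           - (2 * a + 1) * (real (Suc (Suc l)) * gegenbauer_coeff a m (Suc (Suc l)))
           + real m * (real m + 2 * a) * gegenbauer_coeff a m i"
          using Suc \<open>i = Suc j\<close> by (simp add: L_def cd cd1 cC)
        also have "\<dots> = 0" using gegenbauer_coeff_ode[of i a m] Suc \<open>i = Suc j\<close>
          by (simp add: algebra_simps)
        finally show ?thesis by simp
      qed
    qed
  qed
  hence "poly L x = 0" by simp
  thus ?thesis by (simp add: L_def power2_eq_square algebra_simps)
qed

lemma poly_one_plus_power: "poly ([:1, 1:] ^ j) x = (1 + x) ^ j"
  by (simp add: poly_power)

lemma degree_one_plus_power: "degree ([:1, 1::real:] ^ j) = j"
  using degree_linear_power[of "1::real" j] by simp

lemma coeff_one_plus_power_top: "coeff ([:1, 1::real:] ^ j) j = 1"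
  using coeff_linear_power[of "1::real" j] by simp

lemma coeff_one_plus_power_below: "coeff ([:1, 1::real:] ^ Suc j) j = real (Suc j)"
  using coeff_linear_poly_power[of j "Suc j" "1::real" 1] by simp

lemma pos_notin_nonpos_Ints: "x > (0::real) \<Longrightarrow> x \<notin> \<int>\<^sub>\<le>\<^sub>0"
  using nonpos_Ints_nonpos by fastforce

lemma Gamma_plus1_real: "x > (0::real) \<Longrightarrow> Gamma (x + 1) = x * Gamma x"
  using Gamma_plus1[OF pos_notin_nonpos_Ints] .

lemma Beta_one_half: "Beta x (1/2) = Gamma x * sqrt pi / Gamma (x + 1/2 :: real)"
  by (simp add: Beta_def Gamma_one_half_real)

lemma Gamma_legendre_duplication_real:
  fixes a :: real assumes a: "a > 0"
  shows "Gamma a * Gamma (a + 1/2) = 2 powr (1 - 2 * a) * sqrt pi * Gamma (2 * a)"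
proof -
  have n1: "complex_of_real a \<notin> \<int>\<^sub>\<le>\<^sub>0" using pos_notin_nonpos_Ints[OF a] by (simp add: of_real_in_nonpos_Ints_iff)
  have n2': "complex_of_real (a + 1/2) \<notin> \<int>\<^sub>\<le>\<^sub>0"
    using pos_notin_nonpos_Ints[of "a + 1/2"] a by (simp only: of_real_in_nonpos_Ints_iff) simp
  have ee: "complex_of_real a + 1/2 = complex_of_real (a + 1/2)" by simp
  have n2: "complex_of_real a + 1/2 \<notin> \<int>\<^sub>\<le>\<^sub>0" unfolding ee by (rule n2')
  have e1: "Gamma (complex_of_real a + 1/2) = complex_of_real (Gamma (a + 1/2))"
    unfolding ee by (rule Gamma_complex_of_real)
  have e2: "Gamma (2 * complex_of_real a) = complex_of_real (Gamma (2 * a))"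
    using Gamma_complex_of_real[of "2 * a"] by simp
  have e3a: "(1 - 2 * complex_of_real a) * of_real (ln 2) = complex_of_real ((1 - 2 * a) * ln 2)" by simp
  have e3: "exp ((1 - 2 * complex_of_real a) * of_real (ln 2)) = complex_of_real (2 powr (1 - 2 * a))"
    unfolding e3a exp_of_real by (simp add: powr_def)
  have "Gamma (complex_of_real a) * Gamma (complex_of_real a + 1/2) =
          exp ((1 - 2 * complex_of_real a) * of_real (ln 2)) * of_real (sqrt pi) * Gamma (2 * complex_of_real a)"
    by (rule Gamma_legendre_duplication[OF n1 n2])
  hence "complex_of_real (Gamma a) * complex_of_real (Gamma (a + 1/2)) =
         complex_of_real (2 powr (1 - 2 * a)) * complex_of_real (sqrt pi) * complex_of_real (Gamma (2 * a))"
    unfolding e1 e2 e3 Gamma_complex_of_real .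
  thus ?thesis by (metis of_real_mult of_real_eq_iff)
qed

lemma has_integral_Beta_interval:
  fixes a b p q :: real
  assumes ab: "a < b" and p: "p > 0" and q: "q > 0"
  shows "((\<lambda>t. (t - a) powr (p - 1) * (b - t) powr (q - 1)) has_integral
           (b - a) powr (p + q - 1) * Beta p q) {a..b}"
proof -
  define d where "d = b - a"
  have d: "d > 0" using ab by (simp add: d_def)
  have "((\<lambda>x. (1 / d * x + (- a / d)) powr (p - 1) * (1 - (1 / d * x + (- a / d))) powr (q - 1))
          has_integral (Beta p q /\<^sub>R (1 / d) ^ DIM(real)))
          (cbox ((0 - (- a / d)) /\<^sub>R (1 / d)) ((1 - (- a / d)) /\<^sub>R (1 / d)))"
    using has_integral_affinity'[OF has_integral_Beta_real[OF p q, unfolded box_real(2)[symmetric]], of "1/d" "- a / d"] d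
    by simp
  also have "cbox ((0 - (- a / d)) /\<^sub>R (1 / d)) ((1 - (- a / d)) /\<^sub>R (1 / d)) = {a..b}"
    using d by (simp add: d_def field_simps)
  also have "(\<lambda>x. (1 / d * x + (- a / d)) powr (p - 1) * (1 - (1 / d * x + (- a / d))) powr (q - 1))
      = (\<lambda>x. ((x - a) / d) powr (p - 1) * ((b - x) / d) powr (q - 1))"
  proof -
    have h1: "1 / d * x + (- a / d) = (x - a) / d" for x using d by (simp add: field_simps)
    have h2: "1 - (x - a) / d = (b - x) / d" for x using d by (simp add: field_simps d_def)
    show ?thesis by (simp only: h1 h2)
  qed
  finally have I: "((\<lambda>x. ((x - a) / d) powr (p - 1) * ((b - x) / d) powr (q - 1)) has_integral d * Beta p q) {a..b}"
    using d by simp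
  have I2: "((\<lambda>x. (d powr (p - 1) * d powr (q - 1)) * (((x - a) / d) powr (p - 1) * ((b - x) / d) powr (q - 1)))
     has_integral (d powr (p - 1) * d powr (q - 1)) * (d * Beta p q)) {a..b}"
    by (rule has_integral_mult_right[OF I])
  have e: "(d powr (p - 1) * d powr (q - 1)) * (((x - a) / d) powr (p - 1) * ((b - x) / d) powr (q - 1))
      = (x - a) powr (p - 1) * (b - x) powr (q - 1)" if "x \<in> {a..b}" for x
    using that d by (simp add: powr_divide)
  have v: "(d powr (p - 1) * d powr (q - 1)) * (d * Beta p q) = d powr (p + q - 1) * Beta p q"
  proof -
    have "d powr (p + q - 1) = d powr (1 + (p - 1) + (q - 1))"
      by (rule arg_cong[of _ _ "\<lambda>e. d powr e"]) simp
    also have "\<dots> = d powr 1 * d powr (p - 1) * d powr (q - 1)" by (simp only: powr_add)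
    finally show ?thesis using d by simp
  qed
  have "((\<lambda>t. (t - a) powr (p - 1) * (b - t) powr (q - 1)) has_integral d powr (p + q - 1) * Beta p q) {a..b}"
    using has_integral_eq[OF e I2] unfolding v .
  thus ?thesis by (simp add: d_def)
qed

lemma has_integral_Beta_pm1:
  fixes p q :: real assumes "p > 0" "q > 0"
  shows "((\<lambda>t. (t + 1) powr (p - 1) * (1 - t) powr (q - 1)) has_integral 2 powr (p + q - 1) * Beta p q) {-1..1}"
  using has_integral_Beta_interval[of "-1" 1 p q] assms by simp

lemma Beta_half_exchange:
  fixes lam :: real and j k :: nat assumes lam: "lam > 0"
  shows "Beta (lam + real j + 1/2) (1/2) * Beta (lam + real j + 1) (lam + real k)
       = Beta (lam + real k) (1/2) * Beta (lam + real j + 1/2) (lam + real k + 1/2)"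
proof -
  have e1: "lam + real j + 1/2 + 1/2 = lam + real j + 1" by simp
  have e3: "lam + real j + 1/2 + (lam + real k + 1/2) = lam + real j + 1 + (lam + real k)" by simp
  have pos: "Gamma (lam + real j + 1) > 0" "Gamma (lam + real k + 1/2) > 0"
    using lam by (auto intro!: Gamma_real_pos)
  show ?thesis unfolding Beta_def e1 e3
    using pos by (simp add: field_simps)
qed

lemma powr_mult_power:
  fixes y a :: real
  assumes "y \<ge> 0"
  shows "y powr a * y ^ k = y powr (a + real k)"
  using assms by (cases "y = 0") (simp_all add: powr_add powr_realpow)

lemma square_less_one: "x \<in> {-1<..<1} \<Longrightarrow> x\<^sup>2 < (1::real)"
  using abs_square_less_1[of x] by (auto simp: abs_less_iff)

lemma weight_pos: "x \<in> {-1<..<1} \<Longrightarrow> (1 - x\<^sup>2) powr c > (0::real)"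
  using square_less_one[of x] by simp

lemma has_real_derivative_weight:
  assumes x: "x \<in> {-1<..<1::real}"
  shows "((\<lambda>x. (1 - x\<^sup>2) powr b) has_real_derivative b * (1 - x\<^sup>2) powr (b - 1) * (- 2 * x)) (at x)"
proof -
  have pos: "1 - x\<^sup>2 > 0" using x by (simp add: abs_square_less_1 abs_less_iff)
  have "((\<lambda>x. 1 - x\<^sup>2) has_real_derivative (- 2 * x)) (at x)"
    by (auto intro!: derivative_eq_intros)
  from DERIV_fun_powr[OF this pos, of b] show ?thesis by simp
qed

lemma continuous_on_weight: "b > 0 \<Longrightarrow> continuous_on {-1..1::real} (\<lambda>x. (1 - x\<^sup>2) powr b)"
  by (intro continuous_on_powr') (auto intro!: continuous_intros simp: abs_square_le_1)

lemma absolutely_integrable_continuous_mult: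
  fixes g h :: "real \<Rightarrow> real"
  assumes "continuous_on {a..b} g" "h absolutely_integrable_on {a..b}"
  shows "(\<lambda>x. g x * h x) absolutely_integrable_on {a..b}"
proof (rule absolutely_integrable_bounded_measurable_product_real)
  show "g \<in> borel_measurable (lebesgue_on {a..b})"
    by (rule continuous_imp_measurable_on_sets_lebesgue[OF assms(1)]) auto
  show "bounded (g ` {a..b})"
    by (rule compact_imp_bounded[OF compact_continuous_image[OF assms(1)]]) auto
qed (use assms in auto)

lemma has_integral_weight:
  fixes c :: real assumes c: "c > -1"
  shows "((\<lambda>x. (1 - x\<^sup>2) powr c) has_integral 2 powr (2 * c + 1) * Beta (c + 1) (c + 1)) {-1..1}"
proof -
  have I: "((\<lambda>t. (t - (-1)) powr (c + 1 - 1) * (1 - t) powr (c + 1 - 1)) has_integral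
           (1 - (-1)) powr (c + 1 + (c + 1) - 1) * Beta (c + 1) (c + 1)) {-1..1}"
    by (rule has_integral_Beta_interval) (use c in auto)
  have v: "(1 - (-1::real)) powr (c + 1 + (c + 1) - 1) = 2 powr (2 * c + 1)"
    by (rule arg_cong2[of _ _ _ _ "(powr)"]) simp_all
  have e: "(t - (-1)) powr (c + 1 - 1) * (1 - t) powr (c + 1 - 1) = (1 - t\<^sup>2) powr c" if "t \<in> {-1..1}" for t
  proof -
    have "1 - t\<^sup>2 = (1 + t) * (1 - t)" by (simp add: power2_eq_square algebra_simps)
    hence "(1 - t\<^sup>2) powr c = (1 + t) powr c * (1 - t) powr c" using that by (simp add: powr_mult)
    moreover have "t - (-1) = 1 + t" by simp
    ultimately show ?thesis by (simp only: add_diff_cancel_right')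
  qed
  show ?thesis using has_integral_eq[OF e I] unfolding v .
qed

lemma absolutely_integrable_weight: "c > -1 \<Longrightarrow> (\<lambda>x. (1 - x\<^sup>2) powr c) absolutely_integrable_on {-1..1::real}"
  by (rule nonnegative_absolutely_integrable_1) (use has_integral_weight in auto)

lemma absolutely_integrable_continuous_weight:
  assumes "continuous_on {-1..1} g" "c > -1"
  shows "(\<lambda>x. g x * (1 - x\<^sup>2) powr c) absolutely_integrable_on {-1..1::real}"
  by (rule absolutely_integrable_continuous_mult[OF assms(1) absolutely_integrable_weight[OF assms(2)]])

lemma integrable_continuous_weight:
  assumes "continuous_on {-1..1} g" "c > -1"
  shows "(\<lambda>x. g x * (1 - x\<^sup>2) powr c) integrable_on {-1..1::real}"
  using absolutely_integrable_continuous_weight[OF assms] by (rule set_lebesgue_integral_eq_integral(1))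

lemma continuous_on_Icc_abs_bound:
  fixes f :: "real \<Rightarrow> real"
  assumes "continuous_on {a..b} f"
  obtains B where "\<And>t. t \<in> {a..b} \<Longrightarrow> \<bar>f t\<bar> \<le> B"
proof -
  have "bounded (f ` {a..b})"
    by (rule compact_imp_bounded[OF compact_continuous_image[OF assms]]) auto
  then obtain B where "\<forall>y\<in>f ` {a..b}. norm y \<le> B" unfolding bounded_iff by blast
  thus ?thesis by (intro that) auto
qed

lemma continuous_on_mult_vanishing:
  fixes g I :: "real \<Rightarrow> real"
  assumes g: "continuous_on {-1..1} g" "g (-1) = 0" "g 1 = 0"
    and B: "\<And>x. x \<in> {-1..1} \<Longrightarrow> \<bar>I x\<bar> \<le> B"
    and I: "\<And>x. x \<in> {-1<..<1} \<Longrightarrow> isCont I x"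
  shows "continuous_on {-1..1} (\<lambda>x. g x * I x)"
  unfolding continuous_on_eq_continuous_within
proof
  fix x assume x: "x \<in> {-1..(1::real)}"
  show "continuous (at x within {-1..1}) (\<lambda>x. g x * I x)"
  proof (cases "x \<in> {-1<..<1}")
    case True
    have "continuous (at x within {-1..1}) g" using g(1) x continuous_on_eq_continuous_within by blast
    moreover have "continuous (at x within {-1..1}) I" using I[OF True] continuous_at_imp_continuous_at_within by blast
    ultimately show ?thesis by (rule continuous_mult)
  next
    case False
    with x have gx: "g x = 0" using g by auto
    have gl: "(g \<longlongrightarrow> 0) (at x within {-1..1})"
      using g(1) x gx continuous_on_def by metis
    have B0: "B \<ge> 0" using B[of 0] by auto
    have "((\<lambda>y. B * \<bar>g y\<bar>) \<longlongrightarrow> B * \<bar>0\<bar>) (at x within {-1..1})"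
      by (intro tendsto_intros gl)
    hence l2: "((\<lambda>y. B * \<bar>g y\<bar>) \<longlongrightarrow> 0) (at x within {-1..1})" by simp
    have nb: "norm (g y * I y) \<le> B * \<bar>g y\<bar>" if "y \<in> {-1..1}" for y
    proof -
      have "\<bar>I y\<bar> * \<bar>g y\<bar> \<le> B * \<bar>g y\<bar>" by (rule mult_right_mono[OF B[OF that]]) simp
      thus ?thesis by (simp add: abs_mult mult.commute)
    qed
    have ev: "eventually (\<lambda>y. norm (g y * I y) \<le> B * \<bar>g y\<bar>) (at x within {-1..1})"
      unfolding eventually_at_filter by (intro always_eventually allI impI nb) simp
    have "((\<lambda>y. g y * I y) \<longlongrightarrow> 0) (at x within {-1..1})"
      by (rule Lim_null_comparison[OF ev l2])
    thus ?thesis unfolding continuous_within using gx by simp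
  qed
qed

lemma abs_integral_mult_le:
  fixes u h :: "real \<Rightarrow> real"
  assumes uh: "(\<lambda>x. u x * h x) integrable_on S" and h: "(\<lambda>x. \<bar>h x\<bar>) integrable_on S"
    and u: "\<And>x. x \<in> S \<Longrightarrow> \<bar>u x\<bar> \<le> e"
  shows "\<bar>integral S (\<lambda>x. u x * h x)\<bar> \<le> e * integral S (\<lambda>x. \<bar>h x\<bar>)"
proof -
  have "norm (integral S (\<lambda>x. u x * h x)) \<le> integral S (\<lambda>x. e * \<bar>h x\<bar>)"
  proof (rule integral_norm_bound_integral[OF uh])
    show "(\<lambda>x. e * \<bar>h x\<bar>) integrable_on S"
      using integrable_on_cmult_left[OF h, of e] by simp
  qed (simp add: abs_mult mult_right_mono u)
  then show ?thesis by simp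
qed

lemma eq_0_if_abs_le_mult_all:
  fixes x K :: real
  assumes K: "K \<ge> 0" and le: "\<And>e. e > 0 \<Longrightarrow> \<bar>x\<bar> \<le> e * K"
  shows "x = 0"
proof -
  have "\<bar>x\<bar> \<le> 0 + e" if "e > 0" for e
  proof -
    have "\<bar>x\<bar> \<le> e / (K + 1) * K" using le[of "e / (K + 1)"] that K by simp
    also have "\<dots> \<le> e" using that K by (simp add: field_simps)
    finally show ?thesis by simp
  qed
  then have "\<bar>x\<bar> \<le> 0" by (rule field_le_epsilon)
  then show ?thesis by simp
qed

lemma real_poly_approximation:
  fixes f :: "real \<Rightarrow> real"
  assumes f: "continuous_on {a..b} f" and e: "e > 0"
  obtains p :: "real poly" where "\<And>x. x \<in> {a..b} \<Longrightarrow> \<bar>f x - poly p x\<bar> \<le> e"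
proof -
  obtain g where g: "real_polynomial_function g" "\<And>x. x \<in> {a..b} \<Longrightarrow> \<bar>f x - g x\<bar> < e"
    using Stone_Weierstrass_real_polynomial_function[OF compact_Icc f e] by blast
  then obtain c n where "g = (\<lambda>x. \<Sum>i\<le>n. c i * x ^ i)"
    using real_polynomial_function_iff_sum by blast
  then have "poly (\<Sum>i\<le>n. monom (c i) i) = g"
    by (simp add: poly_sum poly_monom fun_eq_iff)
  with g(2) show thesis
    by (intro that[of "\<Sum>i\<le>n. monom (c i) i"]) (simp add: less_imp_le)
qed

lemma integral_spike_endpoints:
  fixes F G :: "real \<Rightarrow> real"
  assumes eq: "\<And>x. x \<in> {-1<..<1} \<Longrightarrow> F x = G x" and G: "G integrable_on {-1..1}"
  shows "F integrable_on {-1..1}" "integral {-1..1} F = integral {-1..1} G"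
proof -
  have eq': "F x = G x" if "x \<in> {-1..1} - {-1, 1}" for x using eq that by auto
  show "F integrable_on {-1..1}"
    by (rule integrable_spike_finite[where S="{-1, 1}" and f=G, OF _ eq' G]) simp
  show "integral {-1..1} F = integral {-1..1} G"
    by (rule integral_spike[of "{-1, 1}"]) (use eq' in auto)
qed

lemma integral_reflect_pm1: fixes h :: "real \<Rightarrow> real" shows "integral {-1..1} (\<lambda>x. h (- x)) = integral {-1..1::real} h"
  using Henstock_Kurzweil_Integration.integral_reflect_real[of 1 "-1" h] by simp

lemma integrable_reflect_pm1: fixes h :: "real \<Rightarrow> real" shows "h integrable_on {-1..1::real} \<Longrightarrow> (\<lambda>x. h (- x)) integrable_on {-1..1}"
  using Henstock_Kurzweil_Integration.integrable_reflect_real[where f=h and a="-1" and b=1] by simp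

lemma integral_linear_combination:
  fixes a b :: real and u v :: "real \<Rightarrow> real"
  assumes "u integrable_on {-1..1}" "v integrable_on {-1..1}"
  shows "integral {-1..1} (\<lambda>x. a * u x + b * v x) = a * integral {-1..1} u + b * integral {-1..1} v"
  using integral_add[OF integrable_on_cmult_left[OF assms(1)] integrable_on_cmult_left[OF assms(2)]]
  by simp

section \<open>Orthogonality and norms\<close>

lemma gegenbauer_ode_divergence_form:
  fixes a :: real
  assumes x: "x \<in> {-1<..<1::real}"
  shows "((\<lambda>x. (1 - x\<^sup>2) powr (a + 1/2) * poly (pderiv (gegenbauer_poly a m)) x) has_real_derivative
           (- (real m * (real m + 2 * a)) * ((1 - x\<^sup>2) powr (a - 1/2) * gegenbauer a m x))) (at x)"
proof -
  define C where "C = gegenbauer_poly a m"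
  have pos: "1 - x\<^sup>2 > 0" using x by (simp add: abs_square_less_1 abs_less_iff)
  have "(1 - x\<^sup>2) powr (a + 1/2) = (1 - x\<^sup>2) powr (1 + (a - 1/2))"
    by (rule arg_cong[of _ _ "\<lambda>e. (1 - x\<^sup>2) powr e"]) simp
  also have "\<dots> = (1 - x\<^sup>2) powr 1 * (1 - x\<^sup>2) powr (a - 1/2)" by (rule powr_add)
  finally have e: "(1 - x\<^sup>2) powr (a + 1/2) = (1 - x\<^sup>2) * (1 - x\<^sup>2) powr (a - 1/2)"
    using pos by simp
  have e2: "a + 1/2 - 1 = a - 1/2" by simp
  have "((\<lambda>x. (1 - x\<^sup>2) powr (a + 1/2) * poly (pderiv C) x) has_real_derivative
      ((a + 1/2) * (1 - x\<^sup>2) powr (a + 1/2 - 1) * (- 2 * x)) * poly (pderiv C) x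
        + (1 - x\<^sup>2) powr (a + 1/2) * poly (pderiv (pderiv C)) x) (at x)"
    by (intro derivative_eq_intros has_real_derivative_weight[OF x] poly_DERIV) (use pos in auto)
  also have "((a + 1/2) * (1 - x\<^sup>2) powr (a + 1/2 - 1) * (- 2 * x)) * poly (pderiv C) x
        + (1 - x\<^sup>2) powr (a + 1/2) * poly (pderiv (pderiv C)) x
      = (1 - x\<^sup>2) powr (a - 1/2) * (poly (pderiv (pderiv C)) x * (1 - x\<^sup>2) - (2 * a + 1) * x * poly (pderiv C) x)"
    unfolding e e2 by (simp add: algebra_simps)
  also have "poly (pderiv (pderiv C)) x * (1 - x\<^sup>2) - (2 * a + 1) * x * poly (pderiv C) x
     = - (real m * (real m + 2 * a)) * poly C x"
    using gegenbauer_poly_ode[of a m x] unfolding C_def by (simp add: algebra_simps)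
  finally show ?thesis by (simp add: C_def poly_gegenbauer_poly mult_ac)
qed

definition gegenbauer_moment :: "real \<Rightarrow> nat \<Rightarrow> nat \<Rightarrow> real" where
  "gegenbauer_moment a m j = integral {-1..1} (\<lambda>x. x ^ j * gegenbauer a m x * (1 - x\<^sup>2) powr (a - 1/2))"

lemma gegenbauer_moment_ibp:
  fixes a :: real
  assumes a: "a > 0"
  shows "real m * (real m + 2 * a) * integral {-1..1} (\<lambda>x. x ^ j * gegenbauer a m x * (1 - x\<^sup>2) powr (a - 1/2))
       = real j * integral {-1..1} (\<lambda>x. x ^ (j - 1) * poly (pderiv (gegenbauer_poly a m)) x * (1 - x\<^sup>2) powr (a + 1/2))"
proof -
  define D where "D = poly (pderiv (gegenbauer_poly a m))"
  define M where "M = real m * (real m + 2 * a)"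
  define h where "h = (\<lambda>x::real. x ^ j * ((1 - x\<^sup>2) powr (a + 1/2) * D x))"
  define g1 where "g1 = (\<lambda>x::real. real j * x ^ (j - 1) * ((1 - x\<^sup>2) powr (a + 1/2) * D x))"
  define g2 where "g2 = (\<lambda>x::real. x ^ j * (- M * ((1 - x\<^sup>2) powr (a - 1/2) * gegenbauer a m x)))"
  have contw: "continuous_on {-1..1} (\<lambda>x::real. (1 - x\<^sup>2) powr (a + 1/2))"
    by (rule continuous_on_weight) (use a in simp)
  have conth: "continuous_on {-1..1} h"
    unfolding h_def D_def by (intro continuous_intros contw)
  have der: "(h has_vector_derivative (g1 x + g2 x)) (at x)" if x: "x \<in> {-1<..<1}" for x
  proof -
    have d1: "((\<lambda>x. x ^ j) has_real_derivative real j * x ^ (j - 1)) (at x)"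
      using DERIV_pow[of j x] by simp
    have "(h has_real_derivative (real j * x ^ (j - 1) * ((1 - x\<^sup>2) powr (a + 1/2) * D x)
         + (- M * ((1 - x\<^sup>2) powr (a - 1/2) * gegenbauer a m x)) * x ^ j)) (at x)"
      unfolding h_def D_def M_def by (rule DERIV_mult[OF d1 gegenbauer_ode_divergence_form[OF x]])
    hence "(h has_real_derivative (real j * x ^ (j - 1) * ((1 - x\<^sup>2) powr (a + 1/2) * D x)
         + x ^ j * (- M * ((1 - x\<^sup>2) powr (a - 1/2) * gegenbauer a m x)))) (at x)"
      by (simp add: mult_ac)
    thus ?thesis unfolding g1_def g2_def by (simp add: has_real_derivative_iff_has_vector_derivative)
  qed
  have h1: "h 1 = 0" "h (-1) = 0" unfolding h_def using a by simp_all
  have I: "((\<lambda>x. g1 x + g2 x) has_integral 0) {-1..1}"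
    using fundamental_theorem_of_calculus_interior[of "-1" 1 h "\<lambda>x. g1 x + g2 x", OF _ conth der] h1 by simp
  have int1: "g1 integrable_on {-1..1}"
    unfolding g1_def D_def by (intro integrable_continuous_real continuous_intros contw)
  have int0: "(\<lambda>x. x ^ j * gegenbauer a m x * (1 - x\<^sup>2) powr (a - 1/2)) integrable_on {-1..1}"
    by (rule integrable_continuous_weight) (use a in \<open>auto intro!: continuous_intros simp: poly_gegenbauer_poly[symmetric]\<close>)
  have g2e: "g2 = (\<lambda>x. - M * (x ^ j * gegenbauer a m x * (1 - x\<^sup>2) powr (a - 1/2)))"
    unfolding g2_def by (simp add: fun_eq_iff mult_ac)
  have int2: "g2 integrable_on {-1..1}" unfolding g2e using integrable_on_cmult_left[OF int0, of "-M"] by simp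
  have "integral {-1..1} (\<lambda>x. g1 x + g2 x) = 0" using I by (rule integral_unique)
  hence "integral {-1..1} g1 + integral {-1..1} g2 = 0" using integral_add[OF int1 int2] by simp
  moreover have "integral {-1..1} g1 = real j * integral {-1..1} (\<lambda>x. x ^ (j - 1) * poly (pderiv (gegenbauer_poly a m)) x * (1 - x\<^sup>2) powr (a + 1/2))"
    unfolding g1_def D_def by (simp add: mult_ac)
  moreover have "integral {-1..1} g2 = - (M * integral {-1..1} (\<lambda>x. x ^ j * gegenbauer a m x * (1 - x\<^sup>2) powr (a - 1/2)))"
    unfolding g2e by simp
  ultimately have "M * integral {-1..1} (\<lambda>x. x ^ j * gegenbauer a m x * (1 - x\<^sup>2) powr (a - 1/2))
     = real j * integral {-1..1} (\<lambda>x. x ^ (j - 1) * poly (pderiv (gegenbauer_poly a m)) x * (1 - x\<^sup>2) powr (a + 1/2))"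
    by linarith
  thus ?thesis unfolding M_def .
qed

lemma gegenbauer_moment_rec:
  assumes a: "a > 0"
  shows "real (Suc m) * (real (Suc m) + 2 * a) * gegenbauer_moment a (Suc m) j = real j * 2 * a * gegenbauer_moment (a + 1) m (j - 1)"
proof -
  have e: "a + 1 - 1/2 = a + 1/2" by simp
  show ?thesis
    using gegenbauer_moment_ibp[OF a, of "Suc m" j] unfolding gegenbauer_moment_def pderiv_gegenbauer_poly e
    by (simp add: poly_gegenbauer_poly mult_ac)
qed

lemma gegenbauer_moment_below:
  assumes "a > 0" "j < m"
  shows "gegenbauer_moment a m j = 0"
  using assms
proof (induction m arbitrary: a j)
  case 0 then show ?case by simp
next
  case (Suc m)
  have "real j * 2 * a * gegenbauer_moment (a + 1) m (j - 1) = 0"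
  proof (cases j)
    case (Suc j') 
    with Suc.prems have "gegenbauer_moment (a + 1) m (j - 1) = 0" by (intro Suc.IH) auto
    thus ?thesis by simp
  qed simp
  with gegenbauer_moment_rec[OF Suc.prems(1), of m j] have "real (Suc m) * (real (Suc m) + 2 * a) * gegenbauer_moment a (Suc m) j = 0"
    by simp
  moreover have "real (Suc m) * (real (Suc m) + 2 * a) \<noteq> 0" using Suc.prems by (simp add: add_pos_pos)
  ultimately show ?case by simp
qed

lemma gegenbauer_moment_diag_rec:
  assumes a: "a > 0"
  shows "gegenbauer_moment a (Suc m) (Suc m) = 2 * a / (real (Suc m) + 2 * a) * gegenbauer_moment (a + 1) m m"
proof -
  have "real (Suc m) * ((real (Suc m) + 2 * a) * gegenbauer_moment a (Suc m) (Suc m)) = real (Suc m) * (2 * a * gegenbauer_moment (a + 1) m m)"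
    using gegenbauer_moment_rec[OF a, of m "Suc m"] by (simp only: mult_ac diff_Suc_1)
  hence "(real (Suc m) + 2 * a) * gegenbauer_moment a (Suc m) (Suc m) = 2 * a * gegenbauer_moment (a + 1) m m"
    by (simp only: mult_cancel_left of_nat_eq_0_iff nat.distinct simp_thms)
  moreover have "real (Suc m) + 2 * a > 0" using a by simp
  ultimately show ?thesis by (simp add: field_simps)
qed

lemma gegenbauer_moment_parity:
  assumes a: "a > 0" and odd: "odd (n + j)"
  shows "gegenbauer_moment a n j = 0"
proof -
  define g where "g = (\<lambda>x::real. x ^ j * gegenbauer a n x * (1 - x\<^sup>2) powr (a - 1/2))"
  have "g (- x) = - g x" for x
  proof -
    have "(-1::real) ^ j * (-1) ^ n = -1" using odd by (simp add: power_add[symmetric])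
    have "(-x) ^ j * gegenbauer a n (-x) = ((-1) ^ j * (-1) ^ n) * (x ^ j * gegenbauer a n x)"
      by (simp add: gegenbauer_minus power_minus[of x j] mult_ac)
    hence "(-x) ^ j * gegenbauer a n (-x) = - (x ^ j * gegenbauer a n x)"
      using \<open>(-1::real) ^ j * (-1) ^ n = -1\<close> by simp
    thus ?thesis by (simp add: g_def)
  qed
  hence gn: "(\<lambda>x. g (- x)) = (\<lambda>x. - g x)" by (simp add: fun_eq_iff)
  have "integral {-1..1} g = integral {- 1..- (- 1)} (\<lambda>x. g (- x))"
    by (rule Henstock_Kurzweil_Integration.integral_reflect_real[symmetric])
  also have "\<dots> = integral {-1..1} (\<lambda>x. - g x)" unfolding gn by simp
  also have "\<dots> = - integral {-1..1} g" by (rule integral_neg)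
  finally have "integral {-1..1} g = 0" by simp
  thus ?thesis by (simp add: gegenbauer_moment_def g_def)
qed

lemma integral_poly_gegenbauer:
  fixes a :: real and q :: "real poly" assumes a: "a > 0"
  shows "integral {-1..1} (\<lambda>x. poly q x * gegenbauer a n x * (1 - x\<^sup>2) powr (a - 1/2))
       = (\<Sum>i\<le>degree q. coeff q i * gegenbauer_moment a n i)"
proof -
  have "integral {-1..1} (\<lambda>x. poly q x * gegenbauer a n x * (1 - x\<^sup>2) powr (a - 1/2))
      = integral {-1..1} (\<lambda>x. \<Sum>i\<le>degree q. coeff q i * (x ^ i * gegenbauer a n x * (1 - x\<^sup>2) powr (a - 1/2)))"
    by (rule integral_cong) (simp add: poly_altdef sum_distrib_right sum_distrib_left mult_ac)
  also have "\<dots> = (\<Sum>i\<le>degree q. integral {-1..1} (\<lambda>x. coeff q i * (x ^ i * gegenbauer a n x * (1 - x\<^sup>2) powr (a - 1/2))))"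
  proof (rule integral_sum)
    fix i
    have h: "(\<lambda>x. x ^ i * gegenbauer a n x * (1 - x\<^sup>2) powr (a - 1/2)) integrable_on {-1..1}"
      by (rule integrable_continuous_weight) (use a in \<open>auto intro!: continuous_intros simp: poly_gegenbauer_poly[symmetric]\<close>)
    thus "(\<lambda>x. coeff q i * (x ^ i * gegenbauer a n x * (1 - x\<^sup>2) powr (a - 1/2))) integrable_on {-1..1}"
      using integrable_on_cmult_left[OF h, of "coeff q i"] by simp
  qed simp
  also have "\<dots> = (\<Sum>i\<le>degree q. coeff q i * gegenbauer_moment a n i)" by (simp add: gegenbauer_moment_def)
  finally show ?thesis .
qed

lemma gegenbauer_orthogonal_poly:
  fixes q :: "real poly" assumes a: "a > 0" and d: "degree q < n"
  shows "integral {-1..1} (\<lambda>x. poly q x * gegenbauer a n x * (1 - x\<^sup>2) powr (a - 1/2)) = 0"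
  unfolding integral_poly_gegenbauer[OF a] using d by (auto intro!: sum.neutral gegenbauer_moment_below[OF a])

lemma integral_poly_gegenbauer_top:
  fixes q :: "real poly" assumes a: "a > 0" and d: "degree q \<le> Suc n"
  shows "integral {-1..1} (\<lambda>x. poly q x * gegenbauer a n x * (1 - x\<^sup>2) powr (a - 1/2)) = coeff q n * gegenbauer_moment a n n"
proof -
  have "(\<Sum>i\<le>degree q. coeff q i * gegenbauer_moment a n i) = (\<Sum>i\<le>Suc n. coeff q i * gegenbauer_moment a n i)"
    by (rule sum.mono_neutral_left) (use d in \<open>auto simp: coeff_eq_0\<close>)
  also have "\<dots> = (\<Sum>i\<in>{n}. coeff q i * gegenbauer_moment a n i)"
  proof (rule sum.mono_neutral_right)
    show "\<forall>i\<in>{..Suc n} - {n}. coeff q i * gegenbauer_moment a n i = 0"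
    proof
      fix i assume i: "i \<in> {..Suc n} - {n}"
      show "coeff q i * gegenbauer_moment a n i = 0"
      proof (cases "i < n")
        case True thus ?thesis using gegenbauer_moment_below[OF a True] by simp
      next
        case False
        with i have "i = Suc n" by auto
        thus ?thesis using gegenbauer_moment_parity[OF a, of n i] by simp
      qed
    qed
  qed auto
  finally show ?thesis unfolding integral_poly_gegenbauer[OF a] by simp
qed

lemma gegenbauer_lead_Gamma:
  "a > 0 \<Longrightarrow> gegenbauer_lead a m = Gamma (a + real m) / Gamma a * 2 ^ m / fact m"
  using pochhammer_Gamma[OF pos_notin_nonpos_Ints, of a m] by (simp add: gegenbauer_lead_def)

lemma gegen_norm_pos: assumes a: "a > 0" shows "gegen_norm a m > 0"
proof -
  have g1: "Gamma a > 0" by (rule Gamma_real_pos[OF a])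
  have g2: "Gamma (2 * a + real m) > 0" by (rule Gamma_real_pos) (use a in simp)
  have "(Gamma a)\<^sup>2 > 0" using g1 by simp
  thus ?thesis unfolding gegen_norm_def using g2 a
    by (intro divide_pos_pos mult_pos_pos) auto
qed

lemma gegenbauer_moment_0_0:
  assumes a: "a > 0" shows "gegenbauer_moment a 0 0 = gegen_norm a 0"
proof -
  have "((\<lambda>x. (1 - x\<^sup>2) powr (a - 1/2)) has_integral 2 powr (2 * (a - 1/2) + 1) * Beta (a - 1/2 + 1) (a - 1/2 + 1)) {-1..1}"
    by (rule has_integral_weight) (use a in simp)
  moreover have "2 * (a - 1/2) + 1 = 2 * a" "a - 1/2 + 1 = a + 1/2" by simp_all
  ultimately have M: "gegenbauer_moment a 0 0 = 2 powr (2 * a) * Beta (a + 1/2) (a + 1/2)"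
    unfolding gegenbauer_moment_def by (simp add: gegenbauer_def integral_unique)
  define t where "t = 2 powr (2 * a - 1)"
  have t: "t > 0" by (simp add: t_def)
  have p: "2 powr (2 * a) = 2 * t" "2 powr (1 - 2 * a) = 1 / t"
    by (simp_all add: t_def powr_diff powr_minus[symmetric])
  have HG: "Gamma (a + 1/2) = (1 / t) * sqrt pi * Gamma (2 * a) / Gamma a"
    using Gamma_legendre_duplication_real[OF a] Gamma_real_pos[OF a] t unfolding p by (simp add: field_simps)
  have B: "Beta (a + 1/2) (a + 1/2) = Gamma (a + 1/2) ^ 2 / (2 * a * Gamma (2 * a))"
    using Gamma_plus1_real[of "2 * a"] a by (simp add: Beta_def power2_eq_square)
  have N: "gegen_norm a 0 = pi * Gamma (2 * a) / (t * a * Gamma a ^ 2)"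
    by (simp add: gegen_norm_def t_def)
  have gp: "Gamma a > 0" "Gamma (2 * a) > 0" using Gamma_real_pos[OF a] Gamma_real_pos[of "2 * a"] a by auto
  show ?thesis
    unfolding M N B HG p using gp a t by (simp add: field_simps power2_eq_square)
qed

lemma gegen_norm_lead_Suc:
  assumes a: "a > 0"
  shows "gegen_norm a (Suc m) / gegenbauer_lead a (Suc m)
       = 2 * a / (real (Suc m) + 2 * a) * (gegen_norm (a + 1) m / gegenbauer_lead (a + 1) m)"
proof -
  define t where "t = 2 powr (2 * a - 1)"
  define G where "G = Gamma (2 * a + real (Suc m))"
  define P where "P = pochhammer (a + 1) m"
  define S where "S = 2 * a + real m + 1"
  define R where "R = a + real m + 1"
  define N1 where "N1 = real m + 1"
  have G1: "Gamma (2 * (a + 1) + real m) = S * G"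
    using Gamma_plus1_real[of "2 * a + real (Suc m)"] a by (simp add: G_def S_def algebra_simps)
  have p2: "2 powr (2 * (a + 1) - 1) = 4 * t"
  proof -
    have "2 powr (2 * (a + 1) - 1) = 2 powr (2 + (2 * a - 1))" by (rule arg_cong[of _ _ "(powr) 2"]) simp
    also have "\<dots> = 2 powr 2 * 2 powr (2 * a - 1)" by (rule powr_add)
    finally show ?thesis by (simp add: t_def)
  qed
  have gn1: "gegen_norm (a + 1) m = pi * (S * G) / (4 * t * fact m * R * (a * Gamma a) ^ 2)"
    unfolding gegen_norm_def G1 Gamma_plus1_real[OF a] p2 R_def by (simp add: algebra_simps)
  have gn2: "gegen_norm a (Suc m) = pi * G / (t * (N1 * fact m) * R * Gamma a ^ 2)"
    unfolding gegen_norm_def G_def t_def R_def N1_def by (simp add: algebra_simps)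
  have l1: "gegenbauer_lead (a + 1) m = P * 2 ^ m / fact m" by (simp add: gegenbauer_lead_def P_def)
  have l2: "gegenbauer_lead a (Suc m) = a * P * (2 * 2 ^ m) / (N1 * fact m)"
    by (simp add: gegenbauer_lead_def P_def N1_def pochhammer_rec algebra_simps)
  have c: "2 * a / (real (Suc m) + 2 * a) = 2 * a / S" by (simp add: S_def algebra_simps)
  have pos: "Gamma a > 0" "t > 0" "P > 0" "G > 0" "S > 0" "R > 0" "N1 > 0" using a Gamma_real_pos[OF a]
    by (auto simp: t_def P_def G_def S_def R_def N1_def intro!: pochhammer_pos)
  show ?thesis
    unfolding gn1 gn2 l1 l2 c using pos a by (simp add: field_simps power2_eq_square)
qed

lemma gegenbauer_moment_diag:
  assumes "a > 0" shows "gegenbauer_moment a m m = gegen_norm a m / gegenbauer_lead a m"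
  using assms
proof (induction m arbitrary: a)
  case 0
  then show ?case by (simp add: gegenbauer_moment_0_0 gegenbauer_lead_def)
next
  case (Suc m)
  then show ?case by (simp add: gegenbauer_moment_diag_rec gegen_norm_lead_Suc)
qed

lemma integral_poly_weight_add:
  fixes a :: real and q A B :: "real poly"
  assumes a: "a > 0"
  shows "integral {-1..1} (\<lambda>x. poly q x * poly (A + B) x * (1 - x\<^sup>2) powr (a - 1/2))
       = integral {-1..1} (\<lambda>x. poly q x * poly A x * (1 - x\<^sup>2) powr (a - 1/2))
         + integral {-1..1} (\<lambda>x. poly q x * poly B x * (1 - x\<^sup>2) powr (a - 1/2))"
proof -
  have "(\<lambda>x. poly q x * poly C x * (1 - x\<^sup>2) powr (a - 1/2)) integrable_on {-1..1}" for C
    using a by (intro integrable_continuous_weight continuous_intros) auto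
  from integral_add[OF this this] show ?thesis
    by (simp add: algebra_simps)
qed

lemma integral_poly_weight_diff:
  fixes a :: real and q A B :: "real poly"
  assumes a: "a > 0"
  shows "integral {-1..1} (\<lambda>x. poly q x * poly (A - B) x * (1 - x\<^sup>2) powr (a - 1/2))
       = integral {-1..1} (\<lambda>x. poly q x * poly A x * (1 - x\<^sup>2) powr (a - 1/2))
         - integral {-1..1} (\<lambda>x. poly q x * poly B x * (1 - x\<^sup>2) powr (a - 1/2))"
proof -
  have "(\<lambda>x. poly q x * poly C x * (1 - x\<^sup>2) powr (a - 1/2)) integrable_on {-1..1}" for C
    using a by (intro integrable_continuous_weight continuous_intros) auto
  from integral_diff[OF this this] show ?thesis
    by (simp add: algebra_simps)
qed

lemma integral_poly_weight_smult:
  fixes a c :: real and q A :: "real poly"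
  shows "integral {-1..1} (\<lambda>x. poly q x * poly (smult c A) x * (1 - x\<^sup>2) powr (a - 1/2))
       = c * integral {-1..1} (\<lambda>x. poly q x * poly A x * (1 - x\<^sup>2) powr (a - 1/2))"
  using integral_mult_right[of "{-1..1}" c "\<lambda>x. poly q x * poly A x * (1 - x\<^sup>2) powr (a - 1/2)"]
  by (simp add: mult_ac)

lemma poly_eq_0_if_orthogonal:
  fixes lam :: real and r :: "real poly"
  assumes lam: "lam > 0" and d: "degree r < n"
    and orth: "\<And>q. degree q < n \<Longrightarrow> integral {-1..1} (\<lambda>x. poly q x * poly r x * (1 - x\<^sup>2) powr (lam - 1/2)) = 0"
  shows "r = 0"
proof -
  define g where "g = (\<lambda>x::real. poly r x * poly r x * (1 - x\<^sup>2) powr (lam - 1/2))"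
  have I0: "integral {-1..1} g = 0" unfolding g_def by (rule orth[OF d])
  have gint: "g integrable_on {-1..1}" unfolding g_def by (rule integrable_continuous_weight, intro continuous_intros) (use lam in simp)
  have gnn: "g x \<ge> 0" for x unfolding g_def by simp
  have root: "poly r x0 = 0" if x0: "x0 \<in> {-1<..<1}" for x0
  proof -
    define a where "a = (x0 - 1) / 2"
    define b where "b = (x0 + 1) / 2"
    have ab: "-1 < a" "a < x0" "x0 < b" "b < 1" using x0 by (auto simp: a_def b_def)
    have sub: "{a..b} \<subseteq> {-1<..<1}" using ab by auto
    have hx: "x\<^sup>2 < 1" if "x \<in> {a..b}" for x using sub that square_less_one by blast
    have contg: "continuous_on {a..b} g"
      unfolding g_def by (intro continuous_intros) (use hx in force)+
    have gint2: "g integrable_on {a..b}" by (rule integrable_continuous_real[OF contg])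
    have "integral {a..b} g \<le> integral {-1..1} g"
      by (rule integral_subset_le) (use ab gint2 gint gnn in auto)
    moreover have "integral {a..b} g \<ge> 0"
      by (rule Henstock_Kurzweil_Integration.integral_nonneg[OF gint2]) (simp add: gnn)
    ultimately have "integral {a..b} g = 0" using I0 by simp
    hence "(g has_integral 0) (cbox a b)" using gint2 by (simp add: has_integral_integral)
    hence "g x0 = 0"
      by (intro has_integral_0_cbox_imp_0[of a b g]) (use contg ab gnn in auto)
    moreover have "(1 - x0\<^sup>2) powr (lam - 1/2) > 0" by (rule weight_pos[OF x0])
    ultimately show ?thesis unfolding g_def by simp
  qed
  show "r = 0"
  proof (rule ccontr)
    assume "r \<noteq> 0"
    hence "finite {x. poly r x = 0}" by (rule poly_roots_finite)
    moreover have "{-1<..<1::real} \<subseteq> {x. poly r x = 0}" using root by auto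
    ultimately have "finite {-1<..<1::real}" by (rule finite_subset[rotated])
    thus False using infinite_Ioo[of "-1" "1::real"] by simp
  qed
qed

lemma gegenbauer_top_coeffs_cancel:
  fixes a :: real and Q :: "real poly"
  assumes a: "a > 0" and dQ: "degree Q \<le> Suc n"
  obtains \<alpha> \<beta> where
    "\<And>i. n \<le> i \<Longrightarrow> coeff (Q - smult \<beta> (gegenbauer_poly a (Suc n)) - smult \<alpha> (gegenbauer_poly a n)) i = 0"
proof -
  define \<beta> where "\<beta> = coeff Q (Suc n) / gegenbauer_lead a (Suc n)"
  define \<alpha> where "\<alpha> = coeff (Q - smult \<beta> (gegenbauer_poly a (Suc n))) n / gegenbauer_lead a n"
  have lead: "gegenbauer_lead a (Suc n) \<noteq> 0" "gegenbauer_lead a n \<noteq> 0"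
    using gegenbauer_lead_pos[OF a] by (auto simp: less_imp_neq[symmetric])
  have "coeff (Q - smult \<beta> (gegenbauer_poly a (Suc n)) - smult \<alpha> (gegenbauer_poly a n)) i = 0" if "n \<le> i" for i
  proof -
    consider "i = n" | "i = Suc n" | "i > Suc n" using \<open>n \<le> i\<close> by linarith
    then show ?thesis
    proof cases
      case 3
      then have "coeff Q i = 0" using dQ by (intro coeff_eq_0) simp
      with 3 show ?thesis by (simp add: coeff_gegenbauer_poly gegenbauer_coeff_above)
    qed (use lead in \<open>simp_all add: \<alpha>_def \<beta>_def coeff_gegenbauer_poly_top coeff_gegenbauer_poly gegenbauer_coeff_above\<close>)
  qed
  then show thesis by (rule that)
qed

lemma poly_eq_gegenbauer_combination:
  fixes a :: real and Q :: "real poly"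
  assumes a: "a > 0" and dQ: "degree Q \<le> Suc n"
    and orth: "\<And>q. degree q < n \<Longrightarrow> integral {-1..1} (\<lambda>x. poly q x * poly Q x * (1 - x\<^sup>2) powr (a - 1/2)) = 0"
  obtains \<alpha> \<beta> where "\<And>x. poly Q x = \<alpha> * gegenbauer a n x + \<beta> * gegenbauer a (Suc n) x"
proof -
  obtain \<alpha> \<beta> where top:
    "\<And>i. n \<le> i \<Longrightarrow> coeff (Q - smult \<beta> (gegenbauer_poly a (Suc n)) - smult \<alpha> (gegenbauer_poly a n)) i = 0"
    using gegenbauer_top_coeffs_cancel[OF a dQ] by blast
  define r where "r = Q - smult \<beta> (gegenbauer_poly a (Suc n)) - smult \<alpha> (gegenbauer_poly a n)"
  have "r = 0"
  proof (rule ccontr)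
    assume "r \<noteq> 0"
    then have dr: "degree r < n"
      using top[of "degree r"] by (fastforce simp: r_def[symmetric])
    have "integral {-1..1} (\<lambda>x. poly q x * poly r x * (1 - x\<^sup>2) powr (a - 1/2)) = 0" if "degree q < n" for q
      using orth[OF that] gegenbauer_orthogonal_poly[OF a that]
        gegenbauer_orthogonal_poly[OF a, of q "Suc n"] that
      by (simp only: r_def integral_poly_weight_diff[OF a] integral_poly_weight_smult) (simp add: poly_gegenbauer_poly)
    then have "r = 0" by (rule poly_eq_0_if_orthogonal[OF a dr])
    with \<open>r \<noteq> 0\<close> show False ..
  qed
  have "poly Q x = \<alpha> * gegenbauer a n x + \<beta> * gegenbauer a (Suc n) x" for x
  proof -
    have "poly Q x - \<beta> * gegenbauer a (Suc n) x - \<alpha> * gegenbauer a n x = 0"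
      using arg_cong[OF \<open>r = 0\<close>, of "\<lambda>p. poly p x"] by (simp add: r_def poly_gegenbauer_poly)
    then show ?thesis by linarith
  qed
  then show thesis by (rule that)
qed

lemma integral_poly_gegenbauer_combination:
  fixes a :: real and q Q :: "real poly"
  assumes a: "a > 0" and dq: "degree q \<le> Suc n"
    and Q: "\<And>x. poly Q x = \<alpha> * gegenbauer a n x + \<beta> * gegenbauer a (Suc n) x"
  shows "integral {-1..1} (\<lambda>x. poly q x * poly Q x * (1 - x\<^sup>2) powr (a - 1/2))
       = \<alpha> * coeff q n * gegenbauer_moment a n n + \<beta> * coeff q (Suc n) * gegenbauer_moment a (Suc n) (Suc n)"
proof -
  have Q': "Q = smult \<alpha> (gegenbauer_poly a n) + smult \<beta> (gegenbauer_poly a (Suc n))"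
    using Q by (simp add: poly_eq_poly_eq_iff[symmetric] fun_eq_iff poly_gegenbauer_poly)
  have "integral {-1..1} (\<lambda>x. poly q x * poly Q x * (1 - x\<^sup>2) powr (a - 1/2))
      = \<alpha> * integral {-1..1} (\<lambda>x. poly q x * gegenbauer a n x * (1 - x\<^sup>2) powr (a - 1/2))
        + \<beta> * integral {-1..1} (\<lambda>x. poly q x * gegenbauer a (Suc n) x * (1 - x\<^sup>2) powr (a - 1/2))"
    by (simp only: Q' integral_poly_weight_add[OF a] integral_poly_weight_smult) (simp add: poly_gegenbauer_poly)
  also have "\<dots> = \<alpha> * coeff q n * gegenbauer_moment a n n + \<beta> * coeff q (Suc n) * gegenbauer_moment a (Suc n) (Suc n)"
    using dq by (simp add: integral_poly_gegenbauer_top[OF a])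
  finally show ?thesis .
qed

section \<open>The fractional integrals\<close>

lemma has_integral_Iplus_kernel:
  fixes x p :: real
  assumes x: "x > -1" and p: "p > 0"
  shows "((\<lambda>\<tau>. (x - \<tau>) powr (-1/2) * (1 + \<tau>) powr (p - 1)) has_integral (1 + x) powr (p - 1/2) * Beta p (1/2)) {-1..x}"
proof -
  have "((\<lambda>t. (t - (-1)) powr (p - 1) * (x - t) powr (1/2 - 1)) has_integral
           (x - (-1)) powr (p + 1/2 - 1) * Beta p (1/2)) {-1..x}"
    by (rule has_integral_Beta_interval) (use x p in auto)
  moreover have "(\<lambda>t. (t - (-1)) powr (p - 1) * (x - t) powr (1/2 - 1)) = (\<lambda>\<tau>. (x - \<tau>) powr (-1/2) * (1 + \<tau>) powr (p - 1))"
    by (auto simp: fun_eq_iff add.commute mult.commute)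
  moreover have "(x - (-1)) powr (p + 1/2 - 1) = (1 + x) powr (p - 1/2)"
    by (rule arg_cong2[of _ _ _ _ "(powr)"]) simp_all
  ultimately show ?thesis by simp
qed

lemma absolutely_integrable_Iplus_kernel:
  fixes x p :: real
  assumes x: "x > -1" and p: "p > 0"
  shows "(\<lambda>\<tau>. (x - \<tau>) powr (-1/2) * (1 + \<tau>) powr (p - 1)) absolutely_integrable_on {-1..x}"
  by (rule nonnegative_absolutely_integrable_1) (use has_integral_Iplus_kernel[OF x p] in auto)

lemma Iplus_power:
  fixes lam x :: real
  assumes lam: "lam > 0" and x: "x > -1"
  shows "Iplus lam (\<lambda>t. (1 + t) ^ j) x = Beta (lam + real j + 1/2) (1/2) * (1 + x) ^ j"
proof -
  have I: "((\<lambda>\<tau>. (x - \<tau>) powr (-1/2) * (1 + \<tau>) powr (lam + real j + 1/2 - 1)) has_integral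
        (1 + x) powr (lam + real j + 1/2 - 1/2) * Beta (lam + real j + 1/2) (1/2)) {-1..x}"
    by (rule has_integral_Iplus_kernel) (use x lam in auto)
  have e: "(x - \<tau>) powr (-1/2) * (1 + \<tau>) powr (lam + real j + 1/2 - 1) =
           (x - \<tau>) powr (-1/2) * (1 + \<tau>) powr (lam - 1/2) * (1 + \<tau>) ^ j" if "\<tau> \<in> {-1..x}" for \<tau>
  proof (cases "\<tau> = -1")
    case True thus ?thesis by simp
  next
    case False
    with that have t: "1 + \<tau> > 0" by auto
    have "(1 + \<tau>) powr (lam + real j + 1/2 - 1) = (1 + \<tau>) powr ((lam - 1/2) + real j)"
      by (rule arg_cong[of _ _ "(powr) (1 + \<tau>)"]) simp
    also have "\<dots> = (1 + \<tau>) powr (lam - 1/2) * (1 + \<tau>) ^ j"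
      using t by (simp add: powr_add powr_realpow)
    finally show ?thesis by simp
  qed
  have "integral {-1..x} (\<lambda>\<tau>. (x - \<tau>) powr (-1/2) * (1 + \<tau>) powr (lam - 1/2) * (1 + \<tau>) ^ j)
        = (1 + x) powr (lam + real j) * Beta (lam + real j + 1/2) (1/2)"
    using has_integral_eq[OF e I] by (simp add: integral_unique)
  moreover have "(1 + x) powr (- lam) * (1 + x) powr (lam + real j) = (1 + x) ^ j"
    using x by (simp add: powr_add[symmetric] powr_realpow)
  ultimately show ?thesis unfolding Iplus_def by (simp add: mult_ac)
qed

lemma absolutely_integrable_Iplus_integrand:
  fixes lam x :: real
  assumes lam: "lam > 0" and x: "x > -1" "x \<le> 1" and f: "continuous_on {-1..1} f"
  shows "(\<lambda>\<tau>. (x - \<tau>) powr (-1/2) * (1 + \<tau>) powr (lam - 1/2) * f \<tau>) absolutely_integrable_on {-1..x}"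
proof -
  have "(\<lambda>\<tau>. f \<tau> * ((x - \<tau>) powr (-1/2) * (1 + \<tau>) powr (lam + 1/2 - 1))) absolutely_integrable_on {-1..x}"
    by (rule absolutely_integrable_continuous_mult[OF continuous_on_subset[OF f] absolutely_integrable_Iplus_kernel[OF x(1)]]) (use x lam in auto)
  thus ?thesis by (simp add: mult_ac)
qed

lemma integrable_Iplus_integrand:
  fixes lam x :: real
  assumes lam: "lam > 0" and x: "x > -1" "x \<le> 1" and f: "continuous_on {-1..1} f"
  shows "(\<lambda>\<tau>. (x - \<tau>) powr (-1/2) * (1 + \<tau>) powr (lam - 1/2) * f \<tau>) integrable_on {-1..x}"
  using absolutely_integrable_Iplus_integrand[OF assms] by (rule set_lebesgue_integral_eq_integral(1))

lemma Iplus_bound: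
  fixes lam x B :: real
  assumes lam: "lam > 0" and x: "x \<in> {-1..1}" and f: "continuous_on {-1..1} f"
    and B: "\<And>t. t \<in> {-1..1} \<Longrightarrow> \<bar>f t\<bar> \<le> B"
  shows "\<bar>Iplus lam f x\<bar> \<le> B * Beta (lam + 1/2) (1/2)"
proof (cases "x = -1")
  case True
  have "B \<ge> 0" using B[of 0] by auto
  moreover have "Beta (lam + 1/2) (1/2) \<ge> 0" using lam by (simp add: Beta_def)
  ultimately show ?thesis using True by (simp add: Iplus_def)
next
  case False
  with x have x1: "x > -1" "x \<le> 1" by auto
  have K: "((\<lambda>\<tau>. (x - \<tau>) powr (-1/2) * (1 + \<tau>) powr (lam + 1/2 - 1)) has_integral (1 + x) powr lam * Beta (lam + 1/2) (1/2)) {-1..x}"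
    using has_integral_Iplus_kernel[OF x1(1), of "lam + 1/2"] lam by simp
  have KB: "((\<lambda>\<tau>. B * ((x - \<tau>) powr (-1/2) * (1 + \<tau>) powr (lam - 1/2))) has_integral B * ((1 + x) powr lam * Beta (lam + 1/2) (1/2))) {-1..x}"
    using has_integral_mult_right[OF K, of B] by simp
  have "norm (integral {-1..x} (\<lambda>\<tau>. (x - \<tau>) powr (-1/2) * (1 + \<tau>) powr (lam - 1/2) * f \<tau>))
        \<le> integral {-1..x} (\<lambda>\<tau>. B * ((x - \<tau>) powr (-1/2) * (1 + \<tau>) powr (lam - 1/2)))"
  proof (rule integral_norm_bound_integral)
    show "(\<lambda>\<tau>. (x - \<tau>) powr (-1/2) * (1 + \<tau>) powr (lam - 1/2) * f \<tau>) integrable_on {-1..x}"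
      by (rule integrable_Iplus_integrand[OF lam x1 f])
    show "(\<lambda>\<tau>. B * ((x - \<tau>) powr (-1/2) * (1 + \<tau>) powr (lam - 1/2))) integrable_on {-1..x}"
      using KB by blast
    fix t assume t: "t \<in> {-1..x}"
    hence "\<bar>f t\<bar> \<le> B" using B x1 by auto
    thus "norm ((x - t) powr (-1/2) * (1 + t) powr (lam - 1/2) * f t) \<le> B * ((x - t) powr (-1/2) * (1 + t) powr (lam - 1/2))"
      by (simp add: abs_mult mult_right_mono mult.commute mult.left_commute)
  qed
  also have "\<dots> = B * ((1 + x) powr lam * Beta (lam + 1/2) (1/2))" using KB by (rule integral_unique)
  finally have "\<bar>integral {-1..x} (\<lambda>\<tau>. (x - \<tau>) powr (-1/2) * (1 + \<tau>) powr (lam - 1/2) * f \<tau>)\<bar>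
        \<le> B * ((1 + x) powr lam * Beta (lam + 1/2) (1/2))" by simp
  hence "(1 + x) powr (- lam) * \<bar>integral {-1..x} (\<lambda>\<tau>. (x - \<tau>) powr (-1/2) * (1 + \<tau>) powr (lam - 1/2) * f \<tau>)\<bar>
        \<le> (1 + x) powr (- lam) * (B * ((1 + x) powr lam * Beta (lam + 1/2) (1/2)))"
    by (rule mult_left_mono) simp
  also have "\<dots> = B * Beta (lam + 1/2) (1/2)"
    using x1 by (simp add: powr_minus field_simps)
  finally show ?thesis unfolding Iplus_def by (simp add: abs_mult)
qed

lemma Iplus_diff:
  fixes lam x :: real
  assumes lam: "lam > 0" and x: "x \<in> {-1..1}" and f: "continuous_on {-1..1} f" and g: "continuous_on {-1..1} g"
  shows "Iplus lam (\<lambda>t. f t - g t) x = Iplus lam f x - Iplus lam g x"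
proof (cases "x = -1")
  case True thus ?thesis by (simp add: Iplus_def)
next
  case False
  with x have x1: "x > -1" "x \<le> 1" by auto
  have e: "integral {-1..x} (\<lambda>\<tau>. (x - \<tau>) powr (-1/2) * (1 + \<tau>) powr (lam - 1/2) * (f \<tau> - g \<tau>))
     = integral {-1..x} (\<lambda>\<tau>. (x - \<tau>) powr (-1/2) * (1 + \<tau>) powr (lam - 1/2) * f \<tau>)
     - integral {-1..x} (\<lambda>\<tau>. (x - \<tau>) powr (-1/2) * (1 + \<tau>) powr (lam - 1/2) * g \<tau>)"
    by (simp only: right_diff_distrib integral_diff[OF integrable_Iplus_integrand[OF lam x1 f] integrable_Iplus_integrand[OF lam x1 g]])
  show ?thesis
    unfolding Iplus_def e by (simp add: right_diff_distrib)
qed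

lemma Iplus_sum:
  fixes lam x :: real
  assumes lam: "lam > 0" and x: "x \<in> {-1..1}" and J: "finite J"
    and g: "\<And>j. j \<in> J \<Longrightarrow> continuous_on {-1..1} (g j)"
  shows "Iplus lam (\<lambda>t. \<Sum>j\<in>J. c j * g j t) x = (\<Sum>j\<in>J. c j * Iplus lam (g j) x)"
proof (cases "x = -1")
  case True thus ?thesis by (simp add: Iplus_def)
next
  case False
  with x have x1: "x > -1" "x \<le> 1" by auto
  have "integral {-1..x} (\<lambda>\<tau>. (x - \<tau>) powr (-1/2) * (1 + \<tau>) powr (lam - 1/2) * (\<Sum>j\<in>J. c j * g j \<tau>))
      = integral {-1..x} (\<lambda>\<tau>. \<Sum>j\<in>J. c j * ((x - \<tau>) powr (-1/2) * (1 + \<tau>) powr (lam - 1/2) * g j \<tau>))"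
    by (rule integral_cong) (simp add: sum_distrib_left sum_distrib_right mult_ac)
  also have "\<dots> = (\<Sum>j\<in>J. integral {-1..x} (\<lambda>\<tau>. c j * ((x - \<tau>) powr (-1/2) * (1 + \<tau>) powr (lam - 1/2) * g j \<tau>)))"
  proof (rule integral_sum[OF J])
    fix j assume j: "j \<in> J"
    show "(\<lambda>\<tau>. c j * ((x - \<tau>) powr (-1/2) * (1 + \<tau>) powr (lam - 1/2) * g j \<tau>)) integrable_on {-1..x}"
      using integrable_on_cmult_left[OF integrable_Iplus_integrand[OF lam x1 g[OF j]], of "c j"] by simp
  qed
  also have "\<dots> = (\<Sum>j\<in>J. c j * integral {-1..x} (\<lambda>\<tau>. (x - \<tau>) powr (-1/2) * (1 + \<tau>) powr (lam - 1/2) * g j \<tau>))"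
    by simp
  finally show ?thesis unfolding Iplus_def by (simp add: sum_distrib_left mult_ac)
qed

lemma poly_eq_sum_one_plus_power: fixes p :: "real poly" shows "poly p t = (\<Sum>j\<le>degree (pcompose p [:-1, 1:]). coeff (pcompose p [:-1, 1:]) j * (1 + t) ^ j)"
proof -
  have e: "poly [:-1, 1:] (1 + t) = t" by simp
  have "poly p t = poly (pcompose p [:-1, 1:]) (1 + t)" by (simp only: poly_pcompose e)
  also have "\<dots> = (\<Sum>j\<le>degree (pcompose p [:-1, 1:]). coeff (pcompose p [:-1, 1:]) j * (1 + t) ^ j)"
    by (rule poly_altdef)
  finally show ?thesis .
qed

lemma has_real_derivative_Iplus_power:
  fixes lam x :: real
  assumes lam: "lam > 0" and x: "x \<in> {-1<..<1}"
  shows "(Iplus lam (\<lambda>t. (1 + t) ^ j) has_real_derivative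
           Beta (lam + real j + 1/2) (1/2) * (real j * (1 + x) ^ (j - 1))) (at x)"
proof -
  have d: "((\<lambda>y. Beta (lam + real j + 1/2) (1/2) * (1 + y) ^ j) has_real_derivative
           Beta (lam + real j + 1/2) (1/2) * (real j * (1 + x) ^ (j - 1))) (at x)"
    by (auto intro!: derivative_eq_intros)
  show ?thesis
    by (rule has_field_derivative_transform_within_open[OF d, of "{-1<..}"])
       (use x Iplus_power[OF lam] in auto)
qed

lemma Dplus_power:
  fixes lam x :: real
  assumes lam: "lam > 0" and x: "x \<in> {-1<..<1}"
  shows "Dplus lam (\<lambda>t. (1 + t) ^ j) x = real j * Beta (lam + real j + 1/2) (1/2) * (1 + x) ^ j"
proof -
  define Bj where "Bj = Beta (lam + real j + 1/2) (1/2)"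
  have dd: "deriv (Iplus lam (\<lambda>t. (1 + t) ^ j)) x = Bj * (real j * (1 + x) ^ (j - 1))"
    unfolding Bj_def by (rule DERIV_imp_deriv[OF has_real_derivative_Iplus_power[OF lam x]])
  have e: "(1 + x) * (real j * (1 + x) ^ (j - 1)) = real j * (1 + x) ^ j"
    by (cases j) auto
  have "Dplus lam (\<lambda>t. (1 + t) ^ j) x = Bj * ((1 + x) * (real j * (1 + x) ^ (j - 1)))"
    unfolding Dplus_def dd by (simp only: mult_ac)
  also have "\<dots> = real j * Bj * (1 + x) ^ j" unfolding e by (simp only: mult_ac)
  finally show ?thesis unfolding Bj_def .
qed

lemma Iminus_eq_Iplus_reflect: "Iminus lam f x = Iplus lam (\<lambda>t. f (- t)) (- x)"
proof -
  define g where "g = (\<lambda>\<sigma>::real. (\<sigma> - x) powr (-1/2) * (1 - \<sigma>) powr (lam - 1/2) * f \<sigma>)"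
  have "(\<lambda>\<tau>. (- x - \<tau>) powr (-1/2) * (1 + \<tau>) powr (lam - 1/2) * f (- \<tau>)) = (\<lambda>\<tau>. g (- \<tau>))"
  proof -
    have e1: "\<And>\<tau>. - x - \<tau> = - \<tau> - x" by simp
    have e2: "\<And>\<tau>::real. 1 + \<tau> = 1 - - \<tau>" by simp
    show ?thesis unfolding g_def by (simp only: e1 e2)
  qed
  hence "integral {-1..-x} (\<lambda>\<tau>. (- x - \<tau>) powr (-1/2) * (1 + \<tau>) powr (lam - 1/2) * f (- \<tau>)) = integral {x..1} g"
    using Henstock_Kurzweil_Integration.integral_reflect_real[of 1 x g] by simp
  thus ?thesis unfolding Iminus_def Iplus_def g_def by simp
qed

lemma Dplus_reflect:
  assumes y: "y \<in> {-1<..<1::real}" and dif: "Iminus lam f differentiable (at (- y))"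
  shows "Iplus lam (\<lambda>t. f (- t)) differentiable (at y)"
    and "Dplus lam (\<lambda>t. f (- t)) y = - Dminus lam f (- y)"
proof -
  have D: "(Iminus lam f has_real_derivative deriv (Iminus lam f) (- y)) (at (- y))"
    using dif DERIV_deriv_iff_real_differentiable by blast
  have "((\<lambda>y. Iminus lam f (- y)) has_real_derivative deriv (Iminus lam f) (- y) * (- 1)) (at y)"
    by (rule DERIV_chain2[OF D DERIV_minus[OF DERIV_ident]])
  moreover have "Iplus lam (\<lambda>t. f (- t)) = (\<lambda>y. Iminus lam f (- y))"
    by (simp add: fun_eq_iff Iminus_eq_Iplus_reflect)
  ultimately have D2: "(Iplus lam (\<lambda>t. f (- t)) has_real_derivative - deriv (Iminus lam f) (- y)) (at y)"
    by simp
  show "Iplus lam (\<lambda>t. f (- t)) differentiable (at y)"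
    using D2 real_differentiable_def by blast
  show "Dplus lam (\<lambda>t. f (- t)) y = - Dminus lam f (- y)"
    unfolding Dplus_def Dminus_def DERIV_imp_deriv[OF D2] by simp
qed

section \<open>The adjoint of the derivative\<close>

definition ibp_poly :: "real \<Rightarrow> real poly \<Rightarrow> real poly" where
  "ibp_poly lam P = smult (lam + 1) ([:1, -1:] * P) - smult lam ([:1, 1:] * P) + [:1, 0, -1:] * pderiv P"

definition ibp_weight :: "real \<Rightarrow> real poly \<Rightarrow> real \<Rightarrow> real" where
  "ibp_weight lam P x = (1 + x) powr lam * (1 - x) powr (lam - 1) * poly (ibp_poly lam P) x"

lemma poly_ibp_poly: "poly (ibp_poly lam P) x = (lam + 1) * (1 - x) * poly P x - lam * (1 + x) * poly P x + (1 - x\<^sup>2) * poly (pderiv P) x"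
  by (simp add: ibp_poly_def power2_eq_square algebra_simps)

lemma has_real_derivative_ibp_weight:
  fixes lam x :: real
  assumes x: "x \<in> {-1<..<1}"
  shows "((\<lambda>x. (1 + x) powr (lam + 1) * (1 - x) powr lam * poly P x) has_real_derivative ibp_weight lam P x) (at x)"
proof -
  have p1: "1 + x > 0" "1 - x > 0" using x by auto
  have d: "((\<lambda>x. (1 + x) powr (lam + 1) * (1 - x) powr lam * poly P x) has_real_derivative
     ((lam + 1) * (1 + x) powr (lam + 1 - 1) * 1 * (1 - x) powr lam
       + (1 + x) powr (lam + 1) * (lam * (1 - x) powr (lam - 1) * (- 1))) * poly P x
       + (1 + x) powr (lam + 1) * (1 - x) powr lam * poly (pderiv P) x) (at x)"
    by (intro DERIV_mult DERIV_fun_powr poly_DERIV derivative_eq_intros) (use p1 in auto)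
  have e1: "(1 + x) powr (lam + 1) = (1 + x) * (1 + x) powr lam"
    using p1 by (simp add: powr_add)
  have e2: "(1 - x) powr lam = (1 - x) * (1 - x) powr (lam - 1)"
  proof -
    have "(1 - x) * (1 - x) powr (lam - 1) = (1 - x) powr 1 * (1 - x) powr (lam - 1)" using p1 by simp
    also have "\<dots> = (1 - x) powr (1 + (lam - 1))" by (rule powr_add[symmetric])
    also have "\<dots> = (1 - x) powr lam" by simp
    finally show ?thesis ..
  qed
  have "((lam + 1) * (1 + x) powr (lam + 1 - 1) * 1 * (1 - x) powr lam
       + (1 + x) powr (lam + 1) * (lam * (1 - x) powr (lam - 1) * (- 1))) * poly P x
       + (1 + x) powr (lam + 1) * (1 - x) powr lam * poly (pderiv P) x = ibp_weight lam P x"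
    unfolding ibp_weight_def poly_ibp_poly e1 e2 by (simp add: power2_eq_square algebra_simps)
  with d show ?thesis by simp
qed

lemma has_integral_Iplus_ibp_weight:
  fixes lam :: real and f :: "real \<Rightarrow> real"
  assumes lam: "lam > 0" and f: "continuous_on {-1..1} f"
    and dif: "\<forall>x\<in>{-1<..<1}. Iplus lam f differentiable (at x)"
    and int: "(\<lambda>x. Dplus lam f x * poly P x * (1 - x\<^sup>2) powr lam) integrable_on {-1..1}"
  shows "((\<lambda>x. Iplus lam f x * ibp_weight lam P x) has_integral
           - integral {-1..1} (\<lambda>x. Dplus lam f x * poly P x * (1 - x\<^sup>2) powr lam)) {-1..1}"
proof -
  define G where "G = (\<lambda>x::real. (1 + x) powr (lam + 1) * (1 - x) powr lam * poly P x)"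
  define h where "h = (\<lambda>x. G x * Iplus lam f x)"
  obtain B where B: "\<And>t. t \<in> {-1..1} \<Longrightarrow> \<bar>f t\<bar> \<le> B" using continuous_on_Icc_abs_bound[OF f] by blast
  have contG: "continuous_on {-1..1} G" unfolding G_def
    by (intro continuous_intros continuous_on_powr') (use lam in auto)
  have IB: "\<bar>Iplus lam f x\<bar> \<le> B * Beta (lam + 1/2) (1/2)" if "x \<in> {-1..1}" for x
    by (rule Iplus_bound[OF lam that f B])
  have der: "(Iplus lam f has_real_derivative deriv (Iplus lam f) x) (at x)" if "x \<in> {-1<..<1}" for x
    using dif that DERIV_deriv_iff_real_differentiable by blast
  have contI: "isCont (Iplus lam f) x" if "x \<in> {-1<..<1}" for x
    using der[OF that] by (rule DERIV_isCont)
  have conth: "continuous_on {-1..1} h" unfolding h_def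
    by (rule continuous_on_mult_vanishing[OF contG _ _ IB contI]) (use lam in \<open>auto simp: G_def\<close>)
  have hd: "(h has_vector_derivative (Iplus lam f x * ibp_weight lam P x + Dplus lam f x * poly P x * (1 - x\<^sup>2) powr lam)) (at x)"
    if x: "x \<in> {-1<..<1}" for x
  proof -
    have p1: "1 + x > 0" "1 - x > 0" using x by auto
    have "(h has_real_derivative ibp_weight lam P x * Iplus lam f x + deriv (Iplus lam f) x * G x) (at x)"
      unfolding h_def G_def by (rule DERIV_mult[OF has_real_derivative_ibp_weight[OF x] der[OF x]])
    moreover have "deriv (Iplus lam f) x * G x = Dplus lam f x * poly P x * (1 - x\<^sup>2) powr lam"
    proof -
      have "(1 - x\<^sup>2) powr lam = (1 + x) powr lam * (1 - x) powr lam"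
        using p1 by (simp add: powr_mult[symmetric] power2_eq_square algebra_simps)
      moreover have "(1 + x) powr (lam + 1) = (1 + x) * (1 + x) powr lam" using p1 by (simp add: powr_add)
      ultimately show ?thesis unfolding G_def Dplus_def by (simp add: mult_ac)
    qed
    ultimately show ?thesis by (simp add: has_real_derivative_iff_has_vector_derivative mult.commute)
  qed
  have h1: "h 1 = 0" "h (-1) = 0" unfolding h_def G_def using lam by auto
  have FT: "((\<lambda>x. Iplus lam f x * ibp_weight lam P x + Dplus lam f x * poly P x * (1 - x\<^sup>2) powr lam) has_integral 0) {-1..1}"
    using fundamental_theorem_of_calculus_interior[of "-1" 1 h, OF _ conth hd] h1 by simp
  have "((\<lambda>x. (Iplus lam f x * ibp_weight lam P x + Dplus lam f x * poly P x * (1 - x\<^sup>2) powr lam)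
       - Dplus lam f x * poly P x * (1 - x\<^sup>2) powr lam) has_integral
       0 - integral {-1..1} (\<lambda>x. Dplus lam f x * poly P x * (1 - x\<^sup>2) powr lam)) {-1..1}"
    by (rule has_integral_diff[OF FT integrable_integral[OF int]])
  thus ?thesis by simp
qed

definition ibp_poly_refl :: "real \<Rightarrow> real poly \<Rightarrow> real poly" where
  "ibp_poly_refl lam P = pcompose (ibp_poly lam P) [:1, -1:]"

text \<open>If \<open>ibp_poly \<lambda> P = (\<Sum>k. r\<^sub>k (1 - x)\<^sup>k)\<close>, then \<open>adjoint_poly \<lambda> P = - (\<Sum>k. r\<^sub>k B(\<lambda> + k, 1/2) (1 - x)\<^sup>k)\<close>:
  this is what exchanging the order of integration in \<open>\<integral> Iplus \<lambda> f \<cdot> ibp_weight \<lambda> P\<close> produces.\<close>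
definition adjoint_poly :: "real \<Rightarrow> real poly \<Rightarrow> real poly" where
  "adjoint_poly lam P = pcompose
     (\<Sum>k\<le>degree (ibp_poly_refl lam P). monom (- coeff (ibp_poly_refl lam P) k * Beta (lam + real k) (1/2)) k)
     [:1, -1:]"

lemma poly_ibp_poly_expansion: "poly (ibp_poly lam P) x = (\<Sum>k\<le>degree (ibp_poly_refl lam P). coeff (ibp_poly_refl lam P) k * (1 - x) ^ k)"
proof -
  have "poly (ibp_poly lam P) x = poly (ibp_poly_refl lam P) (1 - x)" by (simp add: ibp_poly_refl_def poly_pcompose)
  also have "\<dots> = (\<Sum>k\<le>degree (ibp_poly_refl lam P). coeff (ibp_poly_refl lam P) k * (1 - x) ^ k)" by (rule poly_altdef)
  finally show ?thesis .
qed

lemma poly_adjoint_poly: "poly (adjoint_poly lam P) x = (\<Sum>k\<le>degree (ibp_poly_refl lam P). - coeff (ibp_poly_refl lam P) k * Beta (lam + real k) (1/2) * (1 - x) ^ k)"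
  by (simp add: adjoint_poly_def poly_pcompose poly_sum poly_monom)

lemma degree_ibp_poly:
  fixes lam :: real and P :: "real poly"
  shows "degree (ibp_poly lam P) \<le> Suc (degree P)"
proof -
  have "degree (smult (lam + 1) ([:1, -1:] * P)) \<le> Suc (degree P)"
    by (rule order.trans[OF degree_smult_le order.trans[OF degree_mult_le]]) simp
  moreover have "degree (smult lam ([:1, 1:] * P)) \<le> Suc (degree P)"
    by (rule order.trans[OF degree_smult_le order.trans[OF degree_mult_le]]) simp
  moreover have "degree ([:1, 0, -1:] * pderiv P) \<le> Suc (degree P)"
  proof (cases "degree P = 0")
    case True
    hence "pderiv P = 0" by (simp add: pderiv_eq_0_iff)
    thus ?thesis by simp
  next
    case False
    show ?thesis
    proof (rule order.trans[OF degree_mult_le])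
      show "degree [:1, 0, -1 :: real:] + degree (pderiv P) \<le> Suc (degree P)"
        using degree_pderiv[of P] False by simp
    qed
  qed
  ultimately show ?thesis unfolding ibp_poly_def
    by (intro degree_add_le degree_diff_le) auto
qed

lemma degree_adjoint_poly:
  fixes lam :: real and P :: "real poly"
  shows "degree (adjoint_poly lam P) \<le> Suc (degree P)"
proof -
  define S where "S = (\<Sum>k\<le>degree (ibp_poly_refl lam P). monom (- coeff (ibp_poly_refl lam P) k * Beta (lam + real k) (1/2)) k)"
  have "degree S \<le> degree (ibp_poly_refl lam P)"
    unfolding S_def by (intro degree_sum_le) (auto intro: order.trans[OF degree_monom_le])
  also have "\<dots> \<le> Suc (degree P)"
    using degree_pcompose[of "ibp_poly lam P" "[:1, -1:]"] degree_ibp_poly[of lam P] by (simp add: ibp_poly_refl_def)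
  finally show ?thesis
    using degree_pcompose[of S "[:1, -1:]"] unfolding adjoint_poly_def S_def[symmetric] by simp
qed

lemma has_integral_Iplus_power_ibp_weight:
  fixes lam :: real and j :: nat and P :: "real poly"
  assumes lam: "lam > 0"
  defines "r \<equiv> coeff (ibp_poly_refl lam P)" and "N \<equiv> degree (ibp_poly_refl lam P)"
  shows "((\<lambda>x. Iplus lam (\<lambda>t. (1 + t) ^ j) x * ibp_weight lam P x) has_integral
           (\<Sum>k\<le>N. Beta (lam + real j + 1/2) (1/2) * r k *
              (2 powr (2 * lam + real j + real k) * Beta (lam + real j + 1) (lam + real k)))) {-1..1}"
proof -
  define Bj where "Bj = Beta (lam + real j + 1/2) (1/2)"
  have I: "((\<lambda>x. (1 + x) powr (lam + real j) * (1 - x) powr (lam - 1 + real k)) has_integral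
        2 powr (2 * lam + real j + real k) * Beta (lam + real j + 1) (lam + real k)) {-1..1}" for k
  proof -
    have "2 powr (lam + real j + 1 + (lam + real k) - 1) = 2 powr (2 * lam + real j + real k)"
      by (rule arg_cong[of _ _ "(powr) 2"]) simp
    then show ?thesis
      using has_integral_Beta_pm1[of "lam + real j + 1" "lam + real k"] lam by (simp add: algebra_simps)
  qed
  have "Iplus lam (\<lambda>t. (1 + t) ^ j) x * ibp_weight lam P x
      = (\<Sum>k\<le>N. Bj * r k * ((1 + x) powr (lam + real j) * (1 - x) powr (lam - 1 + real k)))"
    if x: "x \<in> {-1..1}" for x
  proof (cases "x = -1")
    case True
    then show ?thesis by (simp add: Iplus_def ibp_weight_def)
  next
    case False
    with x have "x > -1" by auto
    then have "Iplus lam (\<lambda>t. (1 + t) ^ j) x * ibp_weight lam P x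
        = (\<Sum>k\<le>N. Bj * r k * (((1 + x) powr lam * (1 + x) ^ j) * ((1 - x) powr (lam - 1) * (1 - x) ^ k)))"
      unfolding Iplus_power[OF lam \<open>x > -1\<close>] ibp_weight_def poly_ibp_poly_expansion N_def[symmetric] r_def[symmetric] Bj_def
      by (simp add: sum_distrib_left sum_distrib_right mult_ac)
    also have "\<dots> = (\<Sum>k\<le>N. Bj * r k * ((1 + x) powr (lam + real j) * (1 - x) powr (lam - 1 + real k)))"
      using x by (simp add: powr_mult_power)
    finally show ?thesis .
  qed
  then show ?thesis
    unfolding Bj_def[symmetric]
    by (intro has_integral_eq[OF _ has_integral_sum[OF _ has_integral_mult_right[OF I]]]) auto
qed

lemma has_integral_power_adjoint_poly:
  fixes lam :: real and j :: nat and P :: "real poly"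
  assumes lam: "lam > 0"
  defines "r \<equiv> coeff (ibp_poly_refl lam P)" and "N \<equiv> degree (ibp_poly_refl lam P)"
  shows "((\<lambda>x. (1 + x) ^ j * poly (adjoint_poly lam P) x * (1 - x\<^sup>2) powr (lam - 1/2)) has_integral
           - (\<Sum>k\<le>N. Beta (lam + real j + 1/2) (1/2) * r k *
              (2 powr (2 * lam + real j + real k) * Beta (lam + real j + 1) (lam + real k)))) {-1..1}"
proof -
  have I: "((\<lambda>x. (1 + x) powr (lam - 1/2 + real j) * (1 - x) powr (lam - 1/2 + real k)) has_integral
        2 powr (2 * lam + real j + real k) * Beta (lam + real j + 1/2) (lam + real k + 1/2)) {-1..1}" for k
  proof -
    have "2 powr (lam + real j + 1/2 + (lam + real k + 1/2) - 1) = 2 powr (2 * lam + real j + real k)"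
      by (rule arg_cong[of _ _ "(powr) 2"]) simp
    then show ?thesis
      using has_integral_Beta_pm1[of "lam + real j + 1/2" "lam + real k + 1/2"] lam by (simp add: algebra_simps)
  qed
  have "(1 + x) ^ j * poly (adjoint_poly lam P) x * (1 - x\<^sup>2) powr (lam - 1/2)
      = (\<Sum>k\<le>N. - r k * Beta (lam + real k) (1/2) * ((1 + x) powr (lam - 1/2 + real j) * (1 - x) powr (lam - 1/2 + real k)))"
    if x: "x \<in> {-1..1}" for x
  proof -
    have "(1 - x\<^sup>2) powr (lam - 1/2) = (1 + x) powr (lam - 1/2) * (1 - x) powr (lam - 1/2)"
      using x powr_mult[of "1 + x" "1 - x" "lam - 1/2"] by (simp add: power2_eq_square algebra_simps)
    then have "(1 + x) ^ j * poly (adjoint_poly lam P) x * (1 - x\<^sup>2) powr (lam - 1/2)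
        = (\<Sum>k\<le>N. - r k * Beta (lam + real k) (1/2) * (((1 + x) powr (lam - 1/2) * (1 + x) ^ j) * ((1 - x) powr (lam - 1/2) * (1 - x) ^ k)))"
      unfolding poly_adjoint_poly N_def[symmetric] r_def[symmetric]
      by (simp add: sum_distrib_left sum_distrib_right mult_ac)
    also have "\<dots> = (\<Sum>k\<le>N. - r k * Beta (lam + real k) (1/2) * ((1 + x) powr (lam - 1/2 + real j) * (1 - x) powr (lam - 1/2 + real k)))"
      using x by (simp add: powr_mult_power)
    finally show ?thesis .
  qed
  moreover have "((\<lambda>x. \<Sum>k\<le>N. - r k * Beta (lam + real k) (1/2) * ((1 + x) powr (lam - 1/2 + real j) * (1 - x) powr (lam - 1/2 + real k)))
      has_integral (\<Sum>k\<le>N. - r k * Beta (lam + real k) (1/2) * (2 powr (2 * lam + real j + real k) * Beta (lam + real j + 1/2) (lam + real k + 1/2)))) {-1..1}"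
    by (intro has_integral_sum has_integral_mult_right I) auto
  moreover have "(\<Sum>k\<le>N. - r k * Beta (lam + real k) (1/2) * (2 powr (2 * lam + real j + real k) * Beta (lam + real j + 1/2) (lam + real k + 1/2)))
      = - (\<Sum>k\<le>N. Beta (lam + real j + 1/2) (1/2) * r k * (2 powr (2 * lam + real j + real k) * Beta (lam + real j + 1) (lam + real k)))"
    unfolding sum_negf[symmetric] using Beta_half_exchange[OF lam, of j] by (intro sum.cong) (simp_all add: mult_ac)
  ultimately show ?thesis
    by (metis (no_types, lifting) has_integral_eq)
qed

lemma ibp_weight_exchange_poly:
  fixes lam :: real and p P :: "real poly"
  assumes lam: "lam > 0"
  shows "\<exists>V. ((\<lambda>x. Iplus lam (poly p) x * ibp_weight lam P x) has_integral V) {-1..1} \<and>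
             ((\<lambda>x. poly p x * poly (adjoint_poly lam P) x * (1 - x\<^sup>2) powr (lam - 1/2)) has_integral - V) {-1..1}"
proof -
  define p' where "p' = pcompose p [:-1, 1:]"
  define n where "n = degree p'"
  define c where "c = coeff p'"
  define Vj where "Vj = (\<lambda>j::nat. \<Sum>k\<le>degree (ibp_poly_refl lam P). Beta (lam + real j + 1/2) (1/2) * coeff (ibp_poly_refl lam P) k *
                  (2 powr (2 * lam + real j + real k) * Beta (lam + real j + 1) (lam + real k)))"
  have pe: "poly p = (\<lambda>t. \<Sum>j\<le>n. c j * (1 + t) ^ j)"
    using poly_eq_sum_one_plus_power[of p] by (auto simp: fun_eq_iff n_def c_def p'_def)
  have IPe: "Iplus lam (poly p) x = (\<Sum>j\<le>n. c j * Iplus lam (\<lambda>t. (1 + t) ^ j) x)" if "x \<in> {-1..1}" for x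
    unfolding pe by (rule Iplus_sum[OF lam that]) (auto intro!: continuous_intros)
  have L: "((\<lambda>x. \<Sum>j\<le>n. c j * (Iplus lam (\<lambda>t. (1 + t) ^ j) x * ibp_weight lam P x)) has_integral (\<Sum>j\<le>n. c j * Vj j)) {-1..1}"
    unfolding Vj_def by (intro has_integral_sum has_integral_mult_right has_integral_Iplus_power_ibp_weight[OF lam]) auto
  have R: "((\<lambda>x. \<Sum>j\<le>n. c j * ((1 + x) ^ j * poly (adjoint_poly lam P) x * (1 - x\<^sup>2) powr (lam - 1/2))) has_integral (\<Sum>j\<le>n. c j * (- Vj j))) {-1..1}"
    unfolding Vj_def by (intro has_integral_sum has_integral_mult_right has_integral_power_adjoint_poly[OF lam]) auto
  show ?thesis
  proof (intro exI conjI)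
    show "((\<lambda>x. Iplus lam (poly p) x * ibp_weight lam P x) has_integral (\<Sum>j\<le>n. c j * Vj j)) {-1..1}"
      by (rule has_integral_eq[OF _ L]) (simp add: IPe sum_distrib_left mult_ac)
    show "((\<lambda>x. poly p x * poly (adjoint_poly lam P) x * (1 - x\<^sup>2) powr (lam - 1/2)) has_integral - (\<Sum>j\<le>n. c j * Vj j)) {-1..1}"
    proof (rule has_integral_eq[OF _ R[unfolded mult_minus_right sum_negf]])
      fix x :: real assume "x \<in> {-1..1}"
      show "(\<Sum>j\<le>n. c j * ((1 + x) ^ j * poly (adjoint_poly lam P) x * (1 - x\<^sup>2) powr (lam - 1/2)))
          = poly p x * poly (adjoint_poly lam P) x * (1 - x\<^sup>2) powr (lam - 1/2)"
        unfolding pe by (simp add: sum_distrib_right sum_distrib_left mult_ac)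
    qed
  qed
qed

lemma absolutely_integrable_one_minus_powr: "lam > 0 \<Longrightarrow> (\<lambda>x. (1 - x) powr (lam - 1)) absolutely_integrable_on {-1..1::real}"
proof -
  assume lam: "lam > 0"
  have I: "((\<lambda>t. (t + 1) powr (1 - 1) * (1 - t) powr (lam - 1)) has_integral 2 powr (1 + lam - 1) * Beta 1 lam) {-1..1}"
    by (rule has_integral_Beta_pm1) (use lam in auto)
  have "((\<lambda>t. (1 - t) powr (lam - 1)) has_integral 2 powr (1 + lam - 1) * Beta 1 lam) {-1..1}"
    by (rule has_integral_spike_finite[OF _ _ I, of "{-1}"]) auto
  thus ?thesis by (intro nonnegative_absolutely_integrable_1) auto
qed

lemma absolutely_integrable_ibp_weight:
  assumes lam: "lam > 0" shows "ibp_weight lam P absolutely_integrable_on {-1..1}"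
proof -
  have "(\<lambda>x. ((1 + x) powr lam * poly (ibp_poly lam P) x) * (1 - x) powr (lam - 1)) absolutely_integrable_on {-1..1}"
    by (rule absolutely_integrable_continuous_mult[OF _ absolutely_integrable_one_minus_powr[OF lam]]) (intro continuous_intros continuous_on_powr', use lam in auto)
  thus ?thesis unfolding ibp_weight_def by (simp add: mult_ac)
qed

text \<open>Instead of Fubini: both sides are continuous in \<open>f\<close> for the sup norm, and they agree on polynomials.\<close>
lemma ibp_weight_exchange:
  fixes lam :: real and f :: "real \<Rightarrow> real"
  assumes lam: "lam > 0" and f: "continuous_on {-1..1} f"
    and intL: "(\<lambda>x. Iplus lam f x * ibp_weight lam P x) integrable_on {-1..1}"
  shows "integral {-1..1} (\<lambda>x. Iplus lam f x * ibp_weight lam P x)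
       = - integral {-1..1} (\<lambda>x. f x * poly (adjoint_poly lam P) x * (1 - x\<^sup>2) powr (lam - 1/2))"
proof -
  define Q where "Q = (\<lambda>x. poly (adjoint_poly lam P) x * (1 - x\<^sup>2) powr (lam - 1/2))"
  define L where "L = integral {-1..1} (\<lambda>x. Iplus lam f x * ibp_weight lam P x)"
  define R where "R = integral {-1..1} (\<lambda>x. f x * Q x)"
  define K where "K = Beta (lam + 1/2) (1/2) * integral {-1..1} (\<lambda>x. \<bar>ibp_weight lam P x\<bar>)
                    + integral {-1..1} (\<lambda>x. \<bar>Q x\<bar>)"
  have int_Psi: "(\<lambda>x. \<bar>ibp_weight lam P x\<bar>) integrable_on {-1..1}"
    using absolutely_integrable_ibp_weight[OF lam] unfolding absolutely_integrable_on_def by simp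
  have int_Q: "(\<lambda>x. g x * Q x) integrable_on {-1..1}" if g: "continuous_on {-1..1} g" for g
  proof -
    have "(\<lambda>x. (g x * poly (adjoint_poly lam P) x) * (1 - x\<^sup>2) powr (lam - 1/2)) integrable_on {-1..1}"
      using lam by (intro integrable_continuous_weight continuous_intros g) auto
    then show ?thesis by (simp add: Q_def mult.assoc)
  qed
  have int_absQ: "(\<lambda>x. \<bar>Q x\<bar>) integrable_on {-1..1}"
  proof -
    have "(\<lambda>x. \<bar>poly (adjoint_poly lam P) x\<bar> * (1 - x\<^sup>2) powr (lam - 1/2)) integrable_on {-1..1}"
      using lam by (intro integrable_continuous_weight continuous_intros) auto
    then show ?thesis by (simp add: Q_def abs_mult)
  qed
  have K: "K \<ge> 0"
    unfolding K_def using lam int_Psi int_absQ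
    by (intro add_nonneg_nonneg mult_nonneg_nonneg Henstock_Kurzweil_Integration.integral_nonneg)
       (auto simp: Beta_def)
  have approx: "\<bar>L + R\<bar> \<le> e * K" if e: "e > 0" for e
  proof -
    obtain p where p: "\<And>x. x \<in> {-1..1} \<Longrightarrow> \<bar>f x - poly p x\<bar> \<le> e"
      using real_poly_approximation[OF f e] by blast
    obtain V where V: "((\<lambda>x. Iplus lam (poly p) x * ibp_weight lam P x) has_integral V) {-1..1}"
         "((\<lambda>x. poly p x * Q x) has_integral - V) {-1..1}"
      using ibp_weight_exchange_poly[OF lam, of p P] unfolding Q_def by (auto simp: mult.assoc)
    have fp: "continuous_on {-1..1} (\<lambda>t. f t - poly p t)" by (intro continuous_intros f)
    have Ip: "Iplus lam f x * ibp_weight lam P x - Iplus lam (poly p) x * ibp_weight lam P x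
        = Iplus lam (\<lambda>t. f t - poly p t) x * ibp_weight lam P x" if "x \<in> {-1..1}" for x
      using Iplus_diff[OF lam that f, of "poly p"] by (simp add: left_diff_distrib continuous_intros)
    have int_LV: "(\<lambda>x. Iplus lam (\<lambda>t. f t - poly p t) x * ibp_weight lam P x) integrable_on {-1..1}"
      using integrable_diff[OF intL has_integral_integrable[OF V(1)]] by (rule integrable_eq) (rule Ip)
    have "L - V = integral {-1..1} (\<lambda>x. Iplus lam f x * ibp_weight lam P x - Iplus lam (poly p) x * ibp_weight lam P x)"
      unfolding L_def using integral_diff[OF intL has_integral_integrable[OF V(1)]] integral_unique[OF V(1)] by simp
    also have "\<dots> = integral {-1..1} (\<lambda>x. Iplus lam (\<lambda>t. f t - poly p t) x * ibp_weight lam P x)"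
      by (rule integral_cong) (rule Ip)
    finally have LV: "L - V = integral {-1..1} (\<lambda>x. Iplus lam (\<lambda>t. f t - poly p t) x * ibp_weight lam P x)" .
    have "\<bar>L - V\<bar> \<le> (e * Beta (lam + 1/2) (1/2)) * integral {-1..1} (\<lambda>x. \<bar>ibp_weight lam P x\<bar>)"
      unfolding LV by (rule abs_integral_mult_le[OF int_LV int_Psi Iplus_bound[OF lam _ fp p]])
    moreover have "\<bar>R + V\<bar> \<le> e * integral {-1..1} (\<lambda>x. \<bar>Q x\<bar>)"
    proof -
      have "R + V = integral {-1..1} (\<lambda>x. (f x - poly p x) * Q x)"
        using integral_diff[OF int_Q[OF f] has_integral_integrable[OF V(2)]] integral_unique[OF V(2)]
        by (simp add: R_def left_diff_distrib)
      then show ?thesis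
        using abs_integral_mult_le[OF int_Q[OF fp] int_absQ p] by simp
    qed
    ultimately have "\<bar>L + R\<bar> \<le> e * Beta (lam + 1/2) (1/2) * integral {-1..1} (\<lambda>x. \<bar>ibp_weight lam P x\<bar>)
        + e * integral {-1..1} (\<lambda>x. \<bar>Q x\<bar>)"
      by linarith
    then show ?thesis by (simp add: K_def algebra_simps)
  qed
  have "L + R = 0" by (rule eq_0_if_abs_le_mult_all[OF K approx])
  then show ?thesis unfolding L_def R_def Q_def by (simp add: mult.assoc eq_neg_iff_add_eq_0)
qed

lemma integral_Dplus_adjoint:
  fixes lam :: real and f :: "real \<Rightarrow> real"
  assumes lam: "lam > 0" and f: "continuous_on {-1..1} f"
    and dif: "\<forall>x\<in>{-1<..<1}. Iplus lam f differentiable (at x)"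
    and int: "(\<lambda>x. Dplus lam f x * poly P x * (1 - x\<^sup>2) powr lam) integrable_on {-1..1}"
  shows "integral {-1..1} (\<lambda>x. Dplus lam f x * poly P x * (1 - x\<^sup>2) powr lam)
       = integral {-1..1} (\<lambda>x. f x * poly (adjoint_poly lam P) x * (1 - x\<^sup>2) powr (lam - 1/2))"
proof -
  note I = has_integral_Iplus_ibp_weight[OF lam f dif int]
  have "integral {-1..1} (\<lambda>x. Iplus lam f x * ibp_weight lam P x)
       = - integral {-1..1} (\<lambda>x. f x * poly (adjoint_poly lam P) x * (1 - x\<^sup>2) powr (lam - 1/2))"
    by (rule ibp_weight_exchange[OF lam f]) (use I in blast)
  moreover have "integral {-1..1} (\<lambda>x. Iplus lam f x * ibp_weight lam P x) = - integral {-1..1} (\<lambda>x. Dplus lam f x * poly P x * (1 - x\<^sup>2) powr lam)"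
    using I by (rule integral_unique)
  ultimately show ?thesis by simp
qed

lemma integral_adjoint_poly_power:
  fixes lam :: real
  assumes lam: "lam > 0"
  shows "integral {-1..1} (\<lambda>x. (1 + x) ^ j * poly (adjoint_poly lam P) x * (1 - x\<^sup>2) powr (lam - 1/2))
       = real j * Beta (lam + real j + 1/2) (1/2) * integral {-1..1} (\<lambda>x. (1 + x) ^ j * poly P x * (1 - x\<^sup>2) powr lam)"
proof -
  define c where "c = real j * Beta (lam + real j + 1/2) (1/2)"
  have cont: "continuous_on {-1..1} (\<lambda>t::real. (1 + t) ^ j)" by (intro continuous_intros)
  have dif: "\<forall>x\<in>{-1<..<1}. Iplus lam (\<lambda>t. (1 + t) ^ j) differentiable (at x)"
    using has_real_derivative_Iplus_power[OF lam] real_differentiable_def by blast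
  have int0: "(\<lambda>x. c * ((1 + x) ^ j * poly P x * (1 - x\<^sup>2) powr lam)) integrable_on {-1..1}"
  proof -
    have "(\<lambda>x. (1 + x) ^ j * poly P x * (1 - x\<^sup>2) powr (lam + 1/2 - 1/2)) integrable_on {-1..1}"
      by (rule integrable_continuous_weight, intro continuous_intros) (use lam in simp)
    hence h: "(\<lambda>x. (1 + x) ^ j * poly P x * (1 - x\<^sup>2) powr lam) integrable_on {-1..1}" by simp
    from integrable_on_cmult_left[OF h, of c] show ?thesis by simp
  qed
  have eqi: "Dplus lam (\<lambda>t. (1 + t) ^ j) x * poly P x * (1 - x\<^sup>2) powr lam = c * ((1 + x) ^ j * poly P x * (1 - x\<^sup>2) powr lam)"
    if "x \<in> {-1..1} - {-1, 1}" for x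
  proof -
    have "x \<in> {-1<..<1}" using that by auto
    thus ?thesis by (simp add: Dplus_power[OF lam] c_def mult_ac)
  qed
  have int: "(\<lambda>x. Dplus lam (\<lambda>t. (1 + t) ^ j) x * poly P x * (1 - x\<^sup>2) powr lam) integrable_on {-1..1}"
    by (rule integrable_spike_finite[where S="{-1, 1}" and f="\<lambda>x. c * ((1 + x) ^ j * poly P x * (1 - x\<^sup>2) powr lam)", OF _ eqi int0]) simp
  have "integral {-1..1} (\<lambda>x. Dplus lam (\<lambda>t. (1 + t) ^ j) x * poly P x * (1 - x\<^sup>2) powr lam)
     = integral {-1..1} (\<lambda>x. c * ((1 + x) ^ j * poly P x * (1 - x\<^sup>2) powr lam))"
  proof (rule integral_spike[of "{-1, 1}"])
    show "negligible {-1, 1::real}" by (rule negligible_finite) simp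
    fix x assume "x \<in> {-1..1} - {-1, 1::real}"
    thus "c * ((1 + x) ^ j * poly P x * (1 - x\<^sup>2) powr lam) = Dplus lam (\<lambda>t. (1 + t) ^ j) x * poly P x * (1 - x\<^sup>2) powr lam"
      by (rule eqi[symmetric])
  qed
  also have "\<dots> = c * integral {-1..1} (\<lambda>x. (1 + x) ^ j * poly P x * (1 - x\<^sup>2) powr lam)" by simp
  finally show ?thesis
    using integral_Dplus_adjoint[OF lam cont dif int] unfolding c_def by simp
qed

lemma integral_Dplus_poly:
  fixes lam :: real and f g :: "real \<Rightarrow> real" and P :: "real poly"
  assumes lam: "lam > 0" and f: "continuous_on {-1..1} f"
    and dif: "\<forall>x\<in>{-1<..<1}. Iplus lam f differentiable (at x)"
    and g: "continuous_on {-1..1} g" "\<And>x. x \<in> {-1<..<1} \<Longrightarrow> Dplus lam f x = g x"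
  shows "(\<lambda>x. Dplus lam f x * poly P x * (1 - x\<^sup>2) powr lam) integrable_on {-1..1}"
    and "integral {-1..1} (\<lambda>x. Dplus lam f x * poly P x * (1 - x\<^sup>2) powr lam)
       = integral {-1..1} (\<lambda>x. f x * poly (adjoint_poly lam P) x * (1 - x\<^sup>2) powr (lam - 1/2))"
proof -
  have "continuous_on {-1..1} (\<lambda>x. g x * poly P x * (1 - x\<^sup>2) powr lam)"
    by (intro continuous_intros g continuous_on_weight) (use lam in auto)
  then show int: "(\<lambda>x. Dplus lam f x * poly P x * (1 - x\<^sup>2) powr lam) integrable_on {-1..1}"
    by (intro integral_spike_endpoints(1)[OF _ integrable_continuous_real]) (simp_all add: g)
  show "integral {-1..1} (\<lambda>x. Dplus lam f x * poly P x * (1 - x\<^sup>2) powr lam)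
       = integral {-1..1} (\<lambda>x. f x * poly (adjoint_poly lam P) x * (1 - x\<^sup>2) powr (lam - 1/2))"
    by (rule integral_Dplus_adjoint[OF lam f dif int])
qed

lemma integral_Dminus_poly:
  fixes lam :: real and f g :: "real \<Rightarrow> real" and P :: "real poly"
  assumes lam: "lam > 0" and f: "continuous_on {-1..1} f"
    and dif: "\<forall>x\<in>{-1<..<1}. Iminus lam f differentiable (at x)"
    and g: "continuous_on {-1..1} g" "\<And>x. x \<in> {-1<..<1} \<Longrightarrow> Dminus lam f x = g x"
  shows "(\<lambda>x. Dminus lam f x * poly P (- x) * (1 - x\<^sup>2) powr lam) integrable_on {-1..1}"
    and "integral {-1..1} (\<lambda>x. Dminus lam f x * poly P (- x) * (1 - x\<^sup>2) powr lam)
       = - integral {-1..1} (\<lambda>x. f x * poly (adjoint_poly lam P) (- x) * (1 - x\<^sup>2) powr (lam - 1/2))"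
proof -
  define fr where "fr = (\<lambda>t. f (- t))"
  have fr: "continuous_on {-1..1} fr"
    unfolding fr_def by (rule continuous_on_compose2[OF f]) (auto intro!: continuous_intros)
  have dif_fr: "\<forall>y\<in>{-1<..<1}. Iplus lam fr differentiable (at y)"
    unfolding fr_def using Dplus_reflect(1) dif by auto
  have Dplus_fr: "Dplus lam fr y = - g (- y)" if "y \<in> {-1<..<1}" for y
    using that Dplus_reflect(2)[OF that] dif g(2)[of "- y"] by (auto simp: fr_def)
  have g_fr: "continuous_on {-1..1} (\<lambda>y. - g (- y))"
    by (intro continuous_intros continuous_on_compose2[OF g(1)]) auto
  note adj_fr = integral_Dplus_poly[OF lam fr dif_fr g_fr Dplus_fr]
  have "continuous_on {-1..1} (\<lambda>x. g x * poly P (- x) * (1 - x\<^sup>2) powr lam)"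
    by (intro continuous_intros g continuous_on_weight) (use lam in auto)
  then show "(\<lambda>x. Dminus lam f x * poly P (- x) * (1 - x\<^sup>2) powr lam) integrable_on {-1..1}"
    by (intro integral_spike_endpoints(1)[OF _ integrable_continuous_real]) (simp_all add: g)
  have "integral {-1..1} (\<lambda>x. Dminus lam f x * poly P (- x) * (1 - x\<^sup>2) powr lam)
      = integral {-1..1} (\<lambda>x. - (Dplus lam fr (- x) * poly P (- x) * (1 - (- x)\<^sup>2) powr lam))"
  proof (rule integral_spike_endpoints(2))
    show "(\<lambda>x. - (Dplus lam fr (- x) * poly P (- x) * (1 - (- x)\<^sup>2) powr lam)) integrable_on {-1..1}"
      using integrable_neg[OF integrable_reflect_pm1[OF adj_fr(1)]] by simp
  next
    fix x :: real assume "x \<in> {-1<..<1}"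
    then show "Dminus lam f x * poly P (- x) * (1 - x\<^sup>2) powr lam
        = - (Dplus lam fr (- x) * poly P (- x) * (1 - (- x)\<^sup>2) powr lam)"
      using Dplus_reflect(2)[of "- x" lam f] dif by (simp add: fr_def)
  qed
  also have "\<dots> = - integral {-1..1} (\<lambda>y. Dplus lam fr y * poly P y * (1 - y\<^sup>2) powr lam)"
    using integral_reflect_pm1[of "\<lambda>y. - (Dplus lam fr y * poly P y * (1 - y\<^sup>2) powr lam)"] by simp
  also have "\<dots> = - integral {-1..1} (\<lambda>y. fr y * poly (adjoint_poly lam P) y * (1 - y\<^sup>2) powr (lam - 1/2))"
    by (simp only: adj_fr(2))
  also have "\<dots> = - integral {-1..1} (\<lambda>x. f x * poly (adjoint_poly lam P) (- x) * (1 - x\<^sup>2) powr (lam - 1/2))"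
    using integral_reflect_pm1[of "\<lambda>x. f x * poly (adjoint_poly lam P) (- x) * (1 - x\<^sup>2) powr (lam - 1/2)"]
    by (simp add: fr_def)
  finally show "integral {-1..1} (\<lambda>x. Dminus lam f x * poly P (- x) * (1 - x\<^sup>2) powr lam)
       = - integral {-1..1} (\<lambda>x. f x * poly (adjoint_poly lam P) (- x) * (1 - x\<^sup>2) powr (lam - 1/2))" .
qed

section \<open>The adjoint of a Gegenbauer polynomial\<close>

lemma adjoint_gegenbauer_orthogonal:
  fixes lam :: real and q :: "real poly"
  assumes lam: "lam > 0" and d: "degree q < n"
  shows "integral {-1..1} (\<lambda>x. poly q x * poly (adjoint_poly lam (gegenbauer_poly (lam + 1/2) n)) x * (1 - x\<^sup>2) powr (lam - 1/2)) = 0"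
proof -
  define Q where "Q = adjoint_poly lam (gegenbauer_poly (lam + 1/2) n)"
  define q' where "q' = pcompose q [:-1, 1:]"
  have dq': "degree q' = degree q" unfolding q'_def using degree_pcompose[of q "[:-1, 1:]"] by simp
  have pq: "poly q x = (\<Sum>j\<le>degree q. coeff q' j * (1 + x) ^ j)" for x
    using poly_eq_sum_one_plus_power[of q x] by (simp add: q'_def dq'[unfolded q'_def])
  have "integral {-1..1} (\<lambda>x. poly q x * poly Q x * (1 - x\<^sup>2) powr (lam - 1/2))
      = integral {-1..1} (\<lambda>x. \<Sum>j\<le>degree q. coeff q' j * ((1 + x) ^ j * poly Q x * (1 - x\<^sup>2) powr (lam - 1/2)))"
    by (rule integral_cong) (simp only: pq sum_distrib_right mult.assoc)
  also have "\<dots> = (\<Sum>j\<le>degree q. integral {-1..1} (\<lambda>x. coeff q' j * ((1 + x) ^ j * poly Q x * (1 - x\<^sup>2) powr (lam - 1/2))))"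
  proof (rule integral_sum)
    fix j
    have h: "(\<lambda>x. (1 + x) ^ j * poly Q x * (1 - x\<^sup>2) powr (lam - 1/2)) integrable_on {-1..1}"
      by (rule integrable_continuous_weight, intro continuous_intros) (use lam in simp)
    show "(\<lambda>x. coeff q' j * ((1 + x) ^ j * poly Q x * (1 - x\<^sup>2) powr (lam - 1/2))) integrable_on {-1..1}"
      using integrable_on_cmult_left[OF h, of "coeff q' j"] by simp
  qed simp
  also have "\<dots> = 0"
  proof (rule sum.neutral, rule ballI)
    fix j assume j: "j \<in> {..degree q}"
    have "integral {-1..1} (\<lambda>x. (1 + x) ^ j * poly Q x * (1 - x\<^sup>2) powr (lam - 1/2))
        = real j * Beta (lam + real j + 1/2) (1/2) * integral {-1..1} (\<lambda>x. (1 + x) ^ j * poly (gegenbauer_poly (lam + 1/2) n) x * (1 - x\<^sup>2) powr lam)"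
      unfolding Q_def by (rule integral_adjoint_poly_power[OF lam])
    also have "integral {-1..1} (\<lambda>x. (1 + x) ^ j * poly (gegenbauer_poly (lam + 1/2) n) x * (1 - x\<^sup>2) powr lam)
        = integral {-1..1} (\<lambda>x. poly ([:1, 1:] ^ j) x * gegenbauer (lam + 1/2) n x * (1 - x\<^sup>2) powr (lam + 1/2 - 1/2))"
      by (simp add: poly_one_plus_power poly_gegenbauer_poly)
    also have "\<dots> = 0"
      by (rule gegenbauer_orthogonal_poly) (use lam j d in \<open>auto simp: degree_one_plus_power\<close>)
    finally show "integral {-1..1} (\<lambda>x. coeff q' j * ((1 + x) ^ j * poly Q x * (1 - x\<^sup>2) powr (lam - 1/2))) = 0"
      by simp
  qed
  finally show ?thesis unfolding Q_def .
qed

lemma adjoint_gegenbauer_expansion: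
  fixes lam :: real
  assumes lam: "lam > 0"
  obtains \<alpha> \<beta> where
    "\<And>x. poly (adjoint_poly lam (gegenbauer_poly (lam + 1/2) n)) x = \<alpha> * gegenbauer lam n x + \<beta> * gegenbauer lam (Suc n) x"
proof -
  have "degree (adjoint_poly lam (gegenbauer_poly (lam + 1/2) n)) \<le> Suc n"
    using degree_adjoint_poly[of lam "gegenbauer_poly (lam + 1/2) n"] degree_gegenbauer_poly[of "lam + 1/2" n] lam
    by simp
  from poly_eq_gegenbauer_combination[OF lam this adjoint_gegenbauer_orthogonal[OF lam]] that show thesis
    by blast
qed

lemma integral_one_plus_power_gegenbauer:
  fixes lam :: real assumes lam: "lam > 0" and d: "j \<le> Suc n"
  shows "integral {-1..1} (\<lambda>x. (1 + x) ^ j * poly (gegenbauer_poly (lam + 1/2) n) x * (1 - x\<^sup>2) powr lam)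
       = coeff ([:1, 1:] ^ j) n * gegenbauer_moment (lam + 1/2) n n"
proof -
  have "integral {-1..1} (\<lambda>x. (1 + x) ^ j * poly (gegenbauer_poly (lam + 1/2) n) x * (1 - x\<^sup>2) powr lam)
      = integral {-1..1} (\<lambda>x. poly ([:1, 1:] ^ j) x * gegenbauer (lam + 1/2) n x * (1 - x\<^sup>2) powr (lam + 1/2 - 1/2))"
    by (simp add: poly_one_plus_power poly_gegenbauer_poly)
  also have "\<dots> = coeff ([:1, 1:] ^ j) n * gegenbauer_moment (lam + 1/2) n n"
    by (rule integral_poly_gegenbauer_top) (use lam d in \<open>auto simp: degree_one_plus_power\<close>)
  finally show ?thesis .
qed

lemma integral_one_plus_power_adjoint_gegenbauer:
  fixes lam :: real
  assumes lam: "lam > 0" and j: "j \<le> Suc n"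
  shows "integral {-1..1} (\<lambda>x. poly ([:1, 1:] ^ j) x * poly (adjoint_poly lam (gegenbauer_poly (lam + 1/2) n)) x * (1 - x\<^sup>2) powr (lam - 1/2))
       = real j * Beta (lam + real j + 1/2) (1/2) * coeff ([:1, 1:] ^ j) n * gegenbauer_moment (lam + 1/2) n n"
  using integral_adjoint_poly_power[OF lam, of j] integral_one_plus_power_gegenbauer[OF lam j]
  by (simp add: poly_one_plus_power)

lemma adjoint_gegenbauer_expansion_coeffs:
  fixes lam :: real
  assumes lam: "lam > 0"
  obtains \<alpha> \<beta> where
    "\<And>x. poly (adjoint_poly lam (gegenbauer_poly (lam + 1/2) n)) x = \<alpha> * gegenbauer lam n x + \<beta> * gegenbauer lam (Suc n) x"
    "\<alpha> * gegenbauer_moment lam n n = real n * Beta (lam + real n + 1/2) (1/2) * gegenbauer_moment (lam + 1/2) n n"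
    "\<alpha> * real (Suc n) * gegenbauer_moment lam n n + \<beta> * gegenbauer_moment lam (Suc n) (Suc n)
       = real (Suc n) * Beta (lam + real (Suc n) + 1/2) (1/2) * (real (Suc n) * gegenbauer_moment (lam + 1/2) n n)"
proof -
  obtain \<alpha> \<beta> where Q: "\<And>x. poly (adjoint_poly lam (gegenbauer_poly (lam + 1/2) n)) x = \<alpha> * gegenbauer lam n x + \<beta> * gegenbauer lam (Suc n) x"
    using adjoint_gegenbauer_expansion[OF lam] by blast
  have pair: "\<alpha> * coeff ([:1, 1:] ^ j) n * gegenbauer_moment lam n n + \<beta> * coeff ([:1, 1:] ^ j) (Suc n) * gegenbauer_moment lam (Suc n) (Suc n)
      = real j * Beta (lam + real j + 1/2) (1/2) * coeff ([:1, 1:] ^ j) n * gegenbauer_moment (lam + 1/2) n n"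
    if "j \<le> Suc n" for j
    using integral_poly_gegenbauer_combination[OF lam _ Q, of "[:1, 1:] ^ j"]
      integral_one_plus_power_adjoint_gegenbauer[OF lam that] that
    by (simp add: degree_one_plus_power)
  have "coeff ([:1, 1::real:] ^ n) (Suc n) = 0"
    by (simp add: coeff_eq_0 degree_one_plus_power)
  then have E1: "\<alpha> * gegenbauer_moment lam n n = real n * Beta (lam + real n + 1/2) (1/2) * gegenbauer_moment (lam + 1/2) n n"
    using pair[of n] by (simp add: coeff_one_plus_power_top)
  have E2: "\<alpha> * real (Suc n) * gegenbauer_moment lam n n + \<beta> * gegenbauer_moment lam (Suc n) (Suc n)
       = real (Suc n) * Beta (lam + real (Suc n) + 1/2) (1/2) * (real (Suc n) * gegenbauer_moment (lam + 1/2) n n)"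
    using pair[of "Suc n"] coeff_one_plus_power_top[of "Suc n"] coeff_one_plus_power_below[of n]
    by (simp add: mult_ac del: power_Suc)
  from Q E1 E2 show thesis by (rule that)
qed

lemma DDminus_coeff_factor:
  fixes lam :: real assumes lam: "lam > 0"
  shows "2 * real n * Beta (lam + real n + 1/2) (1/2) * gegenbauer_lead lam n / gegenbauer_lead (lam + 1/2) n
       = Gamma (lam + 1/2) * sqrt pi / Gamma lam * (2 * real n / (real n + lam))"
proof -
  define G where "G = Gamma (lam + real n)"
  define H where "H = Gamma (lam + real n + 1/2)"
  define N where "N = real n + lam"
  have pos: "G > 0" "H > 0" "Gamma lam > 0" "Gamma (lam + 1/2) > 0" "N > 0"
    using lam by (auto simp: G_def H_def N_def intro!: Gamma_real_pos)
  have "Gamma (lam + real n + 1/2 + 1/2) = Gamma (lam + real n + 1)"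
    by (rule arg_cong[of _ _ Gamma]) simp
  then have B: "Beta (lam + real n + 1/2) (1/2) = H * sqrt pi / (N * G)"
    using Gamma_plus1_real[of "lam + real n"] lam by (simp add: Beta_one_half G_def H_def N_def add.commute)
  have L: "gegenbauer_lead lam n = G / Gamma lam * 2 ^ n / fact n"
    "gegenbauer_lead (lam + 1/2) n = H / Gamma (lam + 1/2) * 2 ^ n / fact n"
    using lam by (simp_all add: gegenbauer_lead_Gamma G_def H_def add_ac)
  show ?thesis unfolding B L N_def[symmetric] using pos by (simp add: field_simps)
qed

lemma DDplus_coeff_factor:
  fixes lam :: real assumes lam: "lam > 0"
  shows "2 * real (Suc n) * (real (Suc n) * Beta (lam + real (Suc n) + 1/2) (1/2) - real n * Beta (lam + real n + 1/2) (1/2))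
          * gegenbauer_lead lam (Suc n) / gegenbauer_lead (lam + 1/2) n
       = Gamma (lam + 1/2) * sqrt pi / Gamma lam * (2 * (real n + 2 * lam + 1) / (real n + lam + 1))"
proof -
  define G1 where "G1 = Gamma (lam + real n)"
  define G2 where "G2 = Gamma (lam + real n + 1/2)"
  define Ga where "Ga = Gamma lam"
  define Gb where "Gb = Gamma (lam + 1/2)"
  define s where "s = sqrt pi"
  define F where "F = (2::real) ^ n / fact n"
  define N where "N = real n + lam"
  define N1 where "N1 = real n + lam + 1"
  define M where "M = real n + 1"
  define T where "T = real n + 2 * lam + 1"
  have pos: "G1 > 0" "G2 > 0" "Ga > 0" "Gb > 0" "s > 0" "F > 0" "N > 0" "N1 > 0" "M > 0"
    using lam by (auto simp: G1_def G2_def Ga_def Gb_def s_def F_def N_def N1_def M_def)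
  have g3: "Gamma (lam + real n + 1/2 + 1/2) = N * G1"
  proof -
    have "Gamma (lam + real n + 1/2 + 1/2) = Gamma ((lam + real n) + 1)" by (rule arg_cong[of _ _ Gamma]) simp
    then show ?thesis using Gamma_plus1_real[of "lam + real n"] lam by (simp add: G1_def N_def add.commute)
  qed
  have g4: "Gamma (lam + real (Suc n) + 1/2) = (N + 1/2) * G2"
  proof -
    have "Gamma (lam + real (Suc n) + 1/2) = Gamma ((lam + real n + 1/2) + 1)" by (rule arg_cong[of _ _ Gamma]) simp
    then show ?thesis using Gamma_plus1_real[of "lam + real n + 1/2"] lam by (simp add: G2_def N_def add.commute)
  qed
  have g5: "Gamma (lam + real (Suc n) + 1/2 + 1/2) = N1 * (N * G1)"
  proof -
    have "Gamma (lam + real (Suc n) + 1/2 + 1/2) = Gamma ((lam + real n + 1/2 + 1/2) + 1)" by (rule arg_cong[of _ _ Gamma]) simp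
    then show ?thesis using Gamma_plus1_real[of "lam + real n + 1/2 + 1/2"] lam unfolding g3 by (simp add: N1_def add.commute)
  qed
  have B0: "Beta (lam + real n + 1/2) (1/2) = G2 * s / (N * G1)"
    unfolding Beta_def g3 by (simp add: G2_def s_def Gamma_one_half_real)
  have B1: "Beta (lam + real (Suc n) + 1/2) (1/2) = (N + 1/2) * G2 * s / (N1 * (N * G1))"
    unfolding Beta_def g4 g5 by (simp add: s_def Gamma_one_half_real)
  have l1: "gegenbauer_lead lam (Suc n) = N * G1 / Ga * (2 * F / M)"
    using lam g3 Gamma_plus1_real[of "lam + real n"]
    by (simp add: gegenbauer_lead_Gamma G1_def Ga_def F_def M_def N_def add.commute add.left_commute)
  have l2: "gegenbauer_lead (lam + 1/2) n = G2 / Gb * F"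
    using lam by (simp add: gegenbauer_lead_Gamma G2_def Gb_def F_def add_ac)
  have key: "M * ((N + 1/2) * G2 * s / (N1 * (N * G1))) - (M - 1) * (G2 * s / (N * G1))
        = G2 * s / (N * G1) * (T / 2 / N1)"
  proof -
    have "M * ((N + 1/2) * G2 * s / (N1 * (N * G1))) - (M - 1) * (G2 * s / (N * G1))
        = G2 * s / (N * G1) * ((M * (N + 1/2) - (M - 1) * N1) / N1)"
      using pos by (simp add: field_simps)
    also have "M * (N + 1/2) - (M - 1) * N1 = T / 2"
      by (simp add: N_def N1_def M_def T_def algebra_simps)
    finally show ?thesis by simp
  qed
  have main: "2 * M * (M * ((N + 1/2) * G2 * s / (N1 * (N * G1))) - (M - 1) * (G2 * s / (N * G1)))
          * (N * G1 / Ga * (2 * F / M)) / (G2 / Gb * F)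
       = Gb * s / Ga * (2 * T / N1)"
    unfolding key using pos by (simp add: field_simps)
  have eM: "real (Suc n) = M" "real n = M - 1" by (simp_all add: M_def)
  show ?thesis
    unfolding B0 B1 l1 l2
    unfolding T_def[symmetric] N1_def[symmetric]
    unfolding eM
    unfolding Ga_def[symmetric] Gb_def[symmetric] s_def[symmetric]
    by (rule main)
qed

lemma adjoint_gegenbauer_expansion_normalized:
  fixes lam :: real
  assumes lam: "lam > 0"
  obtains \<alpha> \<beta> where
    "\<And>x. poly (adjoint_poly lam (gegenbauer_poly (lam + 1/2) n)) x = \<alpha> * gegenbauer lam n x + \<beta> * gegenbauer lam (Suc n) x"
    "2 * \<alpha> / gegen_norm (lam + 1/2) n
       = Gamma (lam + 1/2) * sqrt pi / Gamma lam * (2 * real n / (real n + lam)) / gegen_norm lam n"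
    "2 * \<beta> / gegen_norm (lam + 1/2) n
       = Gamma (lam + 1/2) * sqrt pi / Gamma lam * (2 * (real n + 2 * lam + 1) / (real n + lam + 1)) / gegen_norm lam (Suc n)"
proof -
  obtain \<alpha> \<beta> where Q: "\<And>x. poly (adjoint_poly lam (gegenbauer_poly (lam + 1/2) n)) x = \<alpha> * gegenbauer lam n x + \<beta> * gegenbauer lam (Suc n) x"
    and E1: "\<alpha> * gegenbauer_moment lam n n = real n * Beta (lam + real n + 1/2) (1/2) * gegenbauer_moment (lam + 1/2) n n"
    and E2: "\<alpha> * real (Suc n) * gegenbauer_moment lam n n + \<beta> * gegenbauer_moment lam (Suc n) (Suc n)
       = real (Suc n) * Beta (lam + real (Suc n) + 1/2) (1/2) * (real (Suc n) * gegenbauer_moment (lam + 1/2) n n)"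
    using adjoint_gegenbauer_expansion_coeffs[OF lam, of n] by blast
  define hm where "hm = gegen_norm (lam + 1/2) n"
  define hl where "hl = gegen_norm lam n"
  define hl1 where "hl1 = gegen_norm lam (Suc n)"
  define Lm where "Lm = gegenbauer_lead (lam + 1/2) n"
  define Ll where "Ll = gegenbauer_lead lam n"
  define Ll1 where "Ll1 = gegenbauer_lead lam (Suc n)"
  define B0 where "B0 = Beta (lam + real n + 1/2) (1/2)"
  define B1 where "B1 = Beta (lam + real (Suc n) + 1/2) (1/2)"
  have pos: "hm > 0" "hl > 0" "hl1 > 0" "Lm > 0" "Ll > 0" "Ll1 > 0"
    using lam by (auto simp: hm_def hl_def hl1_def Lm_def Ll_def Ll1_def intro!: gegen_norm_pos gegenbauer_lead_pos)
  have M: "gegenbauer_moment lam n n = hl / Ll" "gegenbauer_moment lam (Suc n) (Suc n) = hl1 / Ll1"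
    "gegenbauer_moment (lam + 1/2) n n = hm / Lm"
    using lam by (simp_all add: gegenbauer_moment_diag hl_def Ll_def hl1_def Ll1_def hm_def Lm_def)
  have \<alpha>: "\<alpha> = real n * B0 * (hm / Lm) * Ll / hl"
    using E1 pos unfolding M B0_def by (simp add: field_simps)
  have \<beta>: "\<beta> = real (Suc n) * (hm / Lm) * (real (Suc n) * B1 - real n * B0) * Ll1 / hl1"
  proof -
    have "real (Suc n) * (\<alpha> * (hl / Ll)) = real (Suc n) * (real n * B0 * (hm / Lm))"
      using E1 unfolding M B0_def by (simp only:)
    then have "\<alpha> * real (Suc n) * (hl / Ll) = real (Suc n) * (real n * B0 * (hm / Lm))"
      by (simp only: mult_ac)
    moreover have "\<alpha> * real (Suc n) * (hl / Ll) + \<beta> * (hl1 / Ll1) = real (Suc n) * B1 * (real (Suc n) * (hm / Lm))"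
      using E2 unfolding M B1_def .
    ultimately have "\<beta> * (hl1 / Ll1) = real (Suc n) * B1 * (real (Suc n) * (hm / Lm)) - real (Suc n) * (real n * B0 * (hm / Lm))"
      by linarith
    then have "\<beta> * (hl1 / Ll1) = real (Suc n) * (hm / Lm) * (real (Suc n) * B1 - real n * B0)"
      by (simp add: algebra_simps add_divide_distrib)
    with pos show ?thesis by (simp add: field_simps)
  qed
  show thesis
  proof (rule that[OF Q])
    have "2 * \<alpha> / hm = 2 * real n * B0 * Ll / Lm / hl"
      using pos by (simp add: \<alpha> field_simps)
    also have "\<dots> = Gamma (lam + 1/2) * sqrt pi / Gamma lam * (2 * real n / (real n + lam)) / hl"
      unfolding B0_def Ll_def Lm_def DDminus_coeff_factor[OF lam] ..
    finally show "2 * \<alpha> / gegen_norm (lam + 1/2) n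
        = Gamma (lam + 1/2) * sqrt pi / Gamma lam * (2 * real n / (real n + lam)) / gegen_norm lam n"
      unfolding hm_def hl_def .
    have "2 * \<beta> / hm = 2 * real (Suc n) * (real (Suc n) * B1 - real n * B0) * Ll1 / Lm / hl1"
      using pos by (simp add: \<beta> field_simps)
    also have "\<dots> = Gamma (lam + 1/2) * sqrt pi / Gamma lam * (2 * (real n + 2 * lam + 1) / (real n + lam + 1)) / hl1"
      unfolding B0_def B1_def Ll1_def Lm_def DDplus_coeff_factor[OF lam] ..
    finally show "2 * \<beta> / gegen_norm (lam + 1/2) n
        = Gamma (lam + 1/2) * sqrt pi / Gamma lam * (2 * (real n + 2 * lam + 1) / (real n + lam + 1)) / gegen_norm lam (Suc n)"
      unfolding hm_def hl1_def .
  qed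
qed

section \<open>The Gegenbauer coefficients of the derivatives\<close>

lemma integral_Dplus_Dminus_gegenbauer:
  fixes lam :: real and f gp gm :: "real \<Rightarrow> real" and n :: nat
  assumes lam: "lam > 0" and f: "continuous_on {-1..1} f"
    and difp: "\<forall>x\<in>{-1<..<1}. Iplus lam f differentiable (at x)"
    and difm: "\<forall>x\<in>{-1<..<1}. Iminus lam f differentiable (at x)"
    and gp: "continuous_on {-1..1} gp" "\<And>x. x \<in> {-1<..<1} \<Longrightarrow> Dplus lam f x = gp x"
    and gm: "continuous_on {-1..1} gm" "\<And>x. x \<in> {-1<..<1} \<Longrightarrow> Dminus lam f x = gm x"
    and Q: "\<And>x. poly (adjoint_poly lam (gegenbauer_poly (lam + 1/2) n)) x = \<alpha> * gegenbauer lam n x + \<beta> * gegenbauer lam (Suc n) x"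
  defines "P \<equiv> gegenbauer_poly (lam + 1/2) n"
    and "I \<equiv> \<lambda>m. integral {-1..1} (\<lambda>x. f x * gegenbauer lam m x * (1 - x\<^sup>2) powr (lam - 1/2))"
  shows "(\<lambda>x. Dplus lam f x * poly P x * (1 - x\<^sup>2) powr lam) integrable_on {-1..1}"
    and "integral {-1..1} (\<lambda>x. Dplus lam f x * poly P x * (1 - x\<^sup>2) powr lam) = \<alpha> * I n + \<beta> * I (Suc n)"
    and "(\<lambda>x. Dminus lam f x * poly P x * (1 - x\<^sup>2) powr lam) integrable_on {-1..1}"
    and "integral {-1..1} (\<lambda>x. Dminus lam f x * poly P x * (1 - x\<^sup>2) powr lam) = - \<alpha> * I n + \<beta> * I (Suc n)"
proof -
  define sg where "sg = (-1::real) ^ n"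
  have sg2: "sg * sg = 1" unfolding sg_def by (simp add: power_mult_distrib[symmetric])
  have P_minus: "poly P (- x) = sg * poly P x" for x
    by (simp add: P_def poly_gegenbauer_poly gegenbauer_minus sg_def)
  have int_I: "(\<lambda>x. f x * gegenbauer lam m x * (1 - x\<^sup>2) powr (lam - 1/2)) integrable_on {-1..1}" for m
    by (rule integrable_continuous_weight)
       (use lam in \<open>auto intro!: continuous_intros f simp: poly_gegenbauer_poly[symmetric]\<close>)
  have I_adj: "integral {-1..1} (\<lambda>x. f x * poly (adjoint_poly lam P) (c * x) * (1 - x\<^sup>2) powr (lam - 1/2))
      = c ^ n * (\<alpha> * I n + c * \<beta> * I (Suc n))" if c: "c = 1 \<or> c = -1" for c
  proof -
    have "integral {-1..1} (\<lambda>x. f x * poly (adjoint_poly lam P) (c * x) * (1 - x\<^sup>2) powr (lam - 1/2))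
        = integral {-1..1} (\<lambda>x. c ^ n * \<alpha> * (f x * gegenbauer lam n x * (1 - x\<^sup>2) powr (lam - 1/2))
            + c ^ n * c * \<beta> * (f x * gegenbauer lam (Suc n) x * (1 - x\<^sup>2) powr (lam - 1/2)))"
      using c by (intro integral_cong) (auto simp: P_def Q gegenbauer_minus algebra_simps)
    also have "\<dots> = c ^ n * (\<alpha> * I n + c * \<beta> * I (Suc n))"
      unfolding integral_linear_combination[OF int_I int_I] I_def by (simp add: algebra_simps)
    finally show ?thesis .
  qed
  note plus = integral_Dplus_poly[OF lam f difp gp, of P]
  note minus = integral_Dminus_poly[OF lam f difm gm, of P]
  show "(\<lambda>x. Dplus lam f x * poly P x * (1 - x\<^sup>2) powr lam) integrable_on {-1..1}"
    by (rule plus(1))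
  show "integral {-1..1} (\<lambda>x. Dplus lam f x * poly P x * (1 - x\<^sup>2) powr lam) = \<alpha> * I n + \<beta> * I (Suc n)"
    using plus(2) I_adj[of 1] by simp
  have minus_eq: "(\<lambda>x. Dminus lam f x * poly P x * (1 - x\<^sup>2) powr lam)
      = (\<lambda>x. sg * (Dminus lam f x * poly P (- x) * (1 - x\<^sup>2) powr lam))"
    using sg2 by (simp add: P_minus fun_eq_iff mult_ac)
  show "integral {-1..1} (\<lambda>x. Dminus lam f x * poly P x * (1 - x\<^sup>2) powr lam) = - \<alpha> * I n + \<beta> * I (Suc n)"
  proof -
    have "integral {-1..1} (\<lambda>x. Dminus lam f x * poly P x * (1 - x\<^sup>2) powr lam)
        = sg * integral {-1..1} (\<lambda>x. Dminus lam f x * poly P (- x) * (1 - x\<^sup>2) powr lam)"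
      unfolding minus_eq by (rule integral_mult_right)
    also have "\<dots> = sg * - integral {-1..1} (\<lambda>x. f x * poly (adjoint_poly lam P) (- x) * (1 - x\<^sup>2) powr (lam - 1/2))"
      by (simp only: minus(2))
    also have "\<dots> = - (sg * sg) * (\<alpha> * I n - \<beta> * I (Suc n))"
    proof -
      have "integral {-1..1} (\<lambda>x. f x * poly (adjoint_poly lam P) (- x) * (1 - x\<^sup>2) powr (lam - 1/2))
          = sg * (\<alpha> * I n - \<beta> * I (Suc n))"
        using I_adj[of "-1", folded sg_def] by (simp add: algebra_simps)
      then show ?thesis by (simp only:) (simp add: algebra_simps)
    qed
    finally show ?thesis using sg2 by simp
  qed
  show "(\<lambda>x. Dminus lam f x * poly P x * (1 - x\<^sup>2) powr lam) integrable_on {-1..1}"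
    unfolding minus_eq using integrable_on_cmult_left[OF minus(1), of sg] by simp
qed

lemma gegen_coeff_DDplus_DDminus:
  fixes lam :: real and f gp gm :: "real \<Rightarrow> real" and n :: nat
  assumes lam: "lam > 0" and f: "continuous_on {-1..1} f"
    and difp: "\<forall>x\<in>{-1<..<1}. Iplus lam f differentiable (at x)"
    and difm: "\<forall>x\<in>{-1<..<1}. Iminus lam f differentiable (at x)"
    and gp: "continuous_on {-1..1} gp" "\<And>x. x \<in> {-1<..<1} \<Longrightarrow> Dplus lam f x = gp x"
    and gm: "continuous_on {-1..1} gm" "\<And>x. x \<in> {-1<..<1} \<Longrightarrow> Dminus lam f x = gm x"
    and Q: "\<And>x. poly (adjoint_poly lam (gegenbauer_poly (lam + 1/2) n)) x = \<alpha> * gegenbauer lam n x + \<beta> * gegenbauer lam (Suc n) x"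
  defines "I \<equiv> \<lambda>m. integral {-1..1} (\<lambda>x. f x * gegenbauer lam m x * (1 - x\<^sup>2) powr (lam - 1/2))"
  shows "gegen_coeff (lam + 1/2) (DDplus lam f) n = 2 * \<beta> / gegen_norm (lam + 1/2) n * I (Suc n)"
    and "gegen_coeff (lam + 1/2) (DDminus lam f) n = 2 * \<alpha> / gegen_norm (lam + 1/2) n * I n"
proof -
  note A = integral_Dplus_Dminus_gegenbauer[OF lam f difp difm gp gm Q]
  have w: "lam + 1/2 - 1/2 = lam" by simp
  have DD: "integral {-1..1} (\<lambda>x. DDplus lam f x * gegenbauer (lam + 1/2) n x * (1 - x\<^sup>2) powr (lam + 1/2 - 1/2))
        = 2 * \<beta> * I (Suc n)"
      "integral {-1..1} (\<lambda>x. DDminus lam f x * gegenbauer (lam + 1/2) n x * (1 - x\<^sup>2) powr (lam + 1/2 - 1/2))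
        = 2 * \<alpha> * I n"
    using integral_add[OF A(1) A(3)] integral_diff[OF A(1) A(3)] A(2) A(4)
    by (simp_all add: w DDplus_def DDminus_def I_def poly_gegenbauer_poly algebra_simps)
  show "gegen_coeff (lam + 1/2) (DDplus lam f) n = 2 * \<beta> / gegen_norm (lam + 1/2) n * I (Suc n)"
    "gegen_coeff (lam + 1/2) (DDminus lam f) n = 2 * \<alpha> / gegen_norm (lam + 1/2) n * I n"
    unfolding gegen_coeff_def DD by simp_all
qed

theorem theorem2p8:
  fixes f :: "real \<Rightarrow> real" and lam :: real
  assumes "lam > 0"
    and "continuous_on {-1..1} f"
    and "abs_cont_on (-1) 1 f"
    and "\<forall>x\<in>{-1<..<1}. Iplus lam f differentiable (at x)"
    and "\<forall>x\<in>{-1<..<1}. Iminus lam f differentiable (at x)"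
    and "\<exists>g. continuous_on {-1..1} g \<and> (\<forall>x\<in>{-1<..<1}. DDplus lam f x = g x)"
    and "\<exists>g. continuous_on {-1..1} g \<and> (\<forall>x\<in>{-1<..<1}. DDminus lam f x = g x)"
  shows "(\<forall>n. gegen_coeff (lam + 1/2) (DDplus lam f) n =
              Gamma (lam + 1/2) * sqrt pi / Gamma lam *
              (2 * (real n + 2 * lam + 1) / (real n + lam + 1)) * gegen_coeff lam f (Suc n)) \<and>
         (\<forall>n. gegen_coeff (lam + 1/2) (DDminus lam f) n =
              Gamma (lam + 1/2) * sqrt pi / Gamma lam *
              (2 * real n / (real n + lam)) * gegen_coeff lam f n)"
proof -
  obtain g1 where g1: "continuous_on {-1..1} g1" "\<forall>x\<in>{-1<..<1}. DDplus lam f x = g1 x"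
    using assms(6) by blast
  obtain g2 where g2: "continuous_on {-1..1} g2" "\<forall>x\<in>{-1<..<1}. DDminus lam f x = g2 x"
    using assms(7) by blast
  have DD: "Dplus lam f x + Dminus lam f x = g1 x" "Dplus lam f x - Dminus lam f x = g2 x"
    if "x \<in> {-1<..<1}" for x
    using g1(2) g2(2) that unfolding DDplus_def DDminus_def by auto
  have gp: "continuous_on {-1..1} (\<lambda>x. (g1 x + g2 x) / 2)" "\<And>x. x \<in> {-1<..<1} \<Longrightarrow> Dplus lam f x = (g1 x + g2 x) / 2"
    and gm: "continuous_on {-1..1} (\<lambda>x. (g1 x - g2 x) / 2)" "\<And>x. x \<in> {-1<..<1} \<Longrightarrow> Dminus lam f x = (g1 x - g2 x) / 2"
    using g1(1) g2(1) DD by (auto intro!: continuous_intros simp: field_simps)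
  have "gegen_coeff (lam + 1/2) (DDplus lam f) n = Gamma (lam + 1/2) * sqrt pi / Gamma lam *
          (2 * (real n + 2 * lam + 1) / (real n + lam + 1)) * gegen_coeff lam f (Suc n)
      \<and> gegen_coeff (lam + 1/2) (DDminus lam f) n = Gamma (lam + 1/2) * sqrt pi / Gamma lam *
          (2 * real n / (real n + lam)) * gegen_coeff lam f n" for n
  proof -
    obtain \<alpha> \<beta> where Q: "\<And>x. poly (adjoint_poly lam (gegenbauer_poly (lam + 1/2) n)) x = \<alpha> * gegenbauer lam n x + \<beta> * gegenbauer lam (Suc n) x"
      and \<alpha>: "2 * \<alpha> / gegen_norm (lam + 1/2) n = Gamma (lam + 1/2) * sqrt pi / Gamma lam * (2 * real n / (real n + lam)) / gegen_norm lam n"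
      and \<beta>: "2 * \<beta> / gegen_norm (lam + 1/2) n = Gamma (lam + 1/2) * sqrt pi / Gamma lam * (2 * (real n + 2 * lam + 1) / (real n + lam + 1)) / gegen_norm lam (Suc n)"
      using adjoint_gegenbauer_expansion_normalized[OF assms(1)] by blast
    show ?thesis
      using gegen_coeff_DDplus_DDminus[OF assms(1,2,4,5) gp gm Q] unfolding \<alpha> \<beta>
      by (simp add: gegen_coeff_def)
  qed
  then show ?thesis by blast
qed

end
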